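(* Let $s\ge1$ and $\lambda\ge1$ be integers, and let $Q\subseteq V$ be such that $|\bar N^{s-1}(v,Q)|\le\lambda$ for every $v\in V$. Assume the following. <ul> <li>For each $v\in Q$ a depth-$s$ BFS tree $T_v$ rooted at $v$ is given distributedly.</li> <li>Each $v\in Q$ knows the identifiers in $\bar N^s(v,Q)$, and knows $\bar N^{s-1}(w,Q)$ for each neighbour $w$ of $v$.</li> <li>Each node has an $a$-bit identifier unique within its distance-$s$ neighbourhood.</li> <li>Messages have $B$ bits with $B\ge\lambda$.</li> </ul> Then there is a deterministic algorithm for each of the following tasks. <ul> <li>(Broadcast) Each $v\in Q$ sends an $m$-bit message $\mathrm{msg}_v$ to all $w$ with $\operatorname{dist}_G(v,w)\le s$, in $O(s+m\lambda/B)$ rounds.</li> <li>($Q$-message) Each $v\in Q$ sends an individual $m$-bit message $\mathrm{msg}_{v,w}$ to each $w\in\bar N^s(v,Q)$, in $O(s+(m+a)\lambda^2/B)$ rounds.</li> </ul>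
   Context: Setting: synchronous message passing on a connected simple undirected graph $G=(V,E)$ with maximum degree $\Delta$. In each round each node may send a $B$-bit message to each neighbour. Notation: for $s\ge0$ and $X\subseteq V$, $\bar N^s(v,X)=\{w\in X:\operatorname{dist}_G(v,w)\le s\}$; this includes $v$ itself if $v\in X$. A depth-$s$ BFS tree rooted at $x$ is a tree subgraph $T$ of $G$ with vertex set $\{w:\operatorname{dist}_G(x,w)\le s\}$ and $\operatorname{dist}_T(w,x)=\operatorname{dist}_G(w,x)$ for all its vertices. It is given distributedly if each of its nodes knows the root's identifier, its parent and its children in $T$. *)

theory Defs
  imports Complex_Main
begin

text \<open>A graph is a vertex set V (of naturals) with a symmetric irreflexive
edge relation E. Vertices are naturals so that an algorithm cannot depend
on the vertex type.\<close>

definition simple_connected_graph :: "nat set \<Rightarrow> (nat \<times> nat) set \<Rightarrow> bool" where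
  "simple_connected_graph V E \<longleftrightarrow> finite V \<and> V \<noteq> {} \<and> E \<subseteq> V \<times> V \<and> sym E
     \<and> (\<forall>v. (v, v) \<notin> E) \<and> (\<forall>u\<in>V. \<forall>w\<in>V. (u, w) \<in> E\<^sup>*)"

definition dist :: "(nat \<times> nat) set \<Rightarrow> nat \<Rightarrow> nat \<Rightarrow> nat" where
  "dist E u w = (LEAST k. (u, w) \<in> E ^^ k)"

definition nbhd :: "(nat \<times> nat) set \<Rightarrow> nat \<Rightarrow> nat \<Rightarrow> nat set \<Rightarrow> nat set" where
  "nbhd E s v X = {w \<in> X. dist E v w \<le> s}"

text \<open>A connected graph on k vertices is a tree iff it has k-1 edges (here 2(k-1)
ordered pairs).\<close>
definition bfs_tree :: "nat set \<Rightarrow> (nat \<times> nat) set \<Rightarrow> nat \<Rightarrow> nat \<Rightarrow> (nat \<times> nat) set \<Rightarrow> bool" where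
  "bfs_tree V E s x T \<longleftrightarrow>
     T \<subseteq> E \<and> sym T \<and> T \<subseteq> nbhd E s x V \<times> nbhd E s x V
     \<and> (\<forall>w \<in> nbhd E s x V. (w, x) \<in> T\<^sup>* \<and> dist T w x = dist E w x)
     \<and> card T = 2 * (card (nbhd E s x V) - 1)"

definition tree_parent :: "(nat \<times> nat) set \<Rightarrow> nat \<Rightarrow> (nat \<times> nat) set \<Rightarrow> nat \<Rightarrow> nat" where
  "tree_parent E x T w = (THE u. (w, u) \<in> T \<and> dist E x u + 1 = dist E x w)"

definition port_numbering :: "nat set \<Rightarrow> (nat \<times> nat) set \<Rightarrow> (nat \<Rightarrow> nat) \<Rightarrow> (nat \<Rightarrow> nat \<Rightarrow> nat) \<Rightarrow> bool" where
  "port_numbering V E deg pt \<longleftrightarrow>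
     (\<forall>v\<in>V. bij_betw (pt v) {..<deg v} {w. (v, w) \<in> E})"

definition port_of :: "(nat \<Rightarrow> nat) \<Rightarrow> (nat \<Rightarrow> nat \<Rightarrow> nat) \<Rightarrow> nat \<Rightarrow> nat \<Rightarrow> nat" where
  "port_of deg pt v u = (THE p. p < deg v \<and> pt v p = u)"

type_synonym hist = "(nat \<Rightarrow> bool list) list"

text \<open>A deterministic algorithm is given by a message function f: from the
local input and the history of received messages (one per-port vector per round)
it computes the bit string to send on each port in the next round; and an output
function applied after the last round. run gives the received history of v after r rounds.\<close>
fun run :: "('i \<Rightarrow> hist \<Rightarrow> nat \<Rightarrow> bool list) \<Rightarrow> (nat \<Rightarrow> 'i) \<Rightarrow> (nat \<Rightarrow> nat)
             \<Rightarrow> (nat \<Rightarrow> nat \<Rightarrow> nat) \<Rightarrow> nat \<Rightarrow> nat \<Rightarrow> hist" where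
  "run f inp deg pt v 0 = []"
| "run f inp deg pt v (Suc r) = run f inp deg pt v r @
     [\<lambda>p. if p < deg v
          then f (inp (pt v p)) (run f inp deg pt (pt v p) r) (port_of deg pt (pt v p) v)
          else []]"

definition bandwidth_ok :: "nat \<Rightarrow> nat \<Rightarrow> nat set \<Rightarrow> ('i \<Rightarrow> hist \<Rightarrow> nat \<Rightarrow> bool list)
    \<Rightarrow> (nat \<Rightarrow> 'i) \<Rightarrow> (nat \<Rightarrow> nat) \<Rightarrow> (nat \<Rightarrow> nat \<Rightarrow> nat) \<Rightarrow> bool" where
  "bandwidth_ok B R V f inp deg pt \<longleftrightarrow>
     (\<forall>r<R. \<forall>v\<in>V. \<forall>p<deg v. length (f (inp v) (run f inp deg pt v r) p) \<le> B)"

record node_input =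
  nid :: "bool list"
  ndeg :: nat
  inQ :: bool
  trees :: "(bool list \<times> nat option \<times> nat set) set"
  qball :: "bool list set"
  nbrQ :: "nat \<Rightarrow> bool list set"
  payload :: "(bool list \<times> bool list) set"

text \<open>Local input of v: its identifier, degree, whether it is in Q; for every root
r in Q within distance s: (id r, port to its parent in T_r (None at the root),
ports to its children in T_r); if v in Q the ids of bar N^s(v,Q), and for each
port p the ids of bar N^(s-1)(w,Q), w the neighbour at port p; and the
task-specific payload.\<close>
definition mk_input :: "nat set \<Rightarrow> (nat \<times> nat) set \<Rightarrow> (nat \<Rightarrow> nat) \<Rightarrow> (nat \<Rightarrow> nat \<Rightarrow> nat)
    \<Rightarrow> nat set \<Rightarrow> (nat \<Rightarrow> bool list) \<Rightarrow> (nat \<Rightarrow> (nat \<times> nat) set) \<Rightarrow> nat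
    \<Rightarrow> (nat \<Rightarrow> (bool list \<times> bool list) set) \<Rightarrow> nat \<Rightarrow> node_input" where
  "mk_input V E deg pt Q idf Tr s pay v =
    \<lparr> nid = idf v, ndeg = deg v, inQ = (v \<in> Q),
      trees = {(idf r,
                (if v = r then None else Some (port_of deg pt v (tree_parent E r (Tr r) v))),
                {p. p < deg v \<and> (v, pt v p) \<in> Tr r \<and> dist E r (pt v p) = dist E r v + 1})
               | r. r \<in> Q \<and> dist E r v \<le> s},
      qball = (if v \<in> Q then idf ` nbhd E s v Q else {}),
      nbrQ = (\<lambda>p. if v \<in> Q \<and> p < deg v then idf ` nbhd E (s - 1) (pt v p) Q else {}),
      payload = (if v \<in> Q then pay v else {}) \<rparr>"

definition setting :: "nat set \<Rightarrow> (nat \<times> nat) set \<Rightarrow> (nat \<Rightarrow> nat) \<Rightarrow> (nat \<Rightarrow> nat \<Rightarrow> nat)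
    \<Rightarrow> nat set \<Rightarrow> (nat \<Rightarrow> bool list) \<Rightarrow> (nat \<Rightarrow> (nat \<times> nat) set) \<Rightarrow> nat \<Rightarrow> nat \<Rightarrow> nat \<Rightarrow> bool" where
  "setting V E deg pt Q idf Tr s lam a \<longleftrightarrow>
     simple_connected_graph V E \<and> port_numbering V E deg pt \<and> Q \<subseteq> V
     \<and> (\<forall>v\<in>V. card (nbhd E (s - 1) v Q) \<le> lam)
     \<and> (\<forall>r\<in>Q. bfs_tree V E s r (Tr r))
     \<and> (\<forall>v\<in>V. length (idf v) = a)
     \<and> (\<forall>v\<in>V. inj_on idf (nbhd E s v V))"

definition solves_broadcast :: "nat \<Rightarrow> nat \<Rightarrow> nat \<Rightarrow> nat \<Rightarrow> nat \<Rightarrow> nat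
    \<Rightarrow> (node_input \<Rightarrow> hist \<Rightarrow> nat \<Rightarrow> bool list)
    \<Rightarrow> (node_input \<Rightarrow> hist \<Rightarrow> (bool list \<times> bool list) set) \<Rightarrow> bool" where
  "solves_broadcast s lam m a B R f g \<longleftrightarrow>
    (\<forall>V E deg pt Q idf Tr msg.
       setting V E deg pt Q idf Tr s lam a \<and> (\<forall>v\<in>Q. length (msg v) = m) \<longrightarrow>
       (let inp = mk_input V E deg pt Q idf Tr s (\<lambda>v. {(idf v, msg v)}) in
        bandwidth_ok B R V f inp deg pt \<and>
        (\<forall>w\<in>V. g (inp w) (run f inp deg pt w R) = {(idf v, msg v) | v. v \<in> Q \<and> dist E v w \<le> s})))"

definition solves_Qmessage :: "nat \<Rightarrow> nat \<Rightarrow> nat \<Rightarrow> nat \<Rightarrow> nat \<Rightarrow> nat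
    \<Rightarrow> (node_input \<Rightarrow> hist \<Rightarrow> nat \<Rightarrow> bool list)
    \<Rightarrow> (node_input \<Rightarrow> hist \<Rightarrow> (bool list \<times> bool list) set) \<Rightarrow> bool" where
  "solves_Qmessage s lam m a B R f g \<longleftrightarrow>
    (\<forall>V E deg pt Q idf Tr msg.
       setting V E deg pt Q idf Tr s lam a
       \<and> (\<forall>v\<in>Q. \<forall>w\<in>nbhd E s v Q. length (msg v w) = m) \<longrightarrow>
       (let inp = mk_input V E deg pt Q idf Tr s
                    (\<lambda>v. {(idf w, msg v w) | w. w \<in> nbhd E s v Q}) in
        bandwidth_ok B R V f inp deg pt \<and>
        (\<forall>w\<in>Q. g (inp w) (run f inp deg pt w R) = {(idf v, msg v w) | v. v \<in> nbhd E s w Q})))"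

end

theory Submission
  imports Defs "HOL-Library.List_Lexorder"
begin

text \<open>All communication runs along the given BFS trees. The trees T r in which the edge at
a port of v leads to a child of v have their roots in the ball of radius s - 1 around v, and
those in which it leads to the parent of v have their roots in that ball around the neighbour;
so at most \<lambda> trees use an edge in a given direction, and each of them gets a slot of
b = B div \<lambda> bits in every message on it, the slots ordered (lexicographically) by root identifier.
During the first s rounds a flag travels down every tree, one level per round, and each node
learns its depth in each tree containing it. For broadcast, from round s on every root sends its
message in b-bit chunks down its tree, and every node forwards in each round the chunk it has
just received; a node at depth d has all ceil(m/b) chunks after round 2s + ceil(m/b).
For Q-messages the traffic is reversed: in T w, a node at depth d sends to its parent, from
round 2s - d on, the stream of reports (identifier of v, message of v for w) of the Q-nodes v of
its subtree, assembled from its own report and the streams of its children, which started one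
round earlier. Those nodes lie in the ball of radius s - 1 around a child of w, so w has
received at most \<lambda> reports of a + m + 1 bits from each child after
2s + O((a + m) \<lambda> / b) rounds.\<close>

section \<open>Slots and chunks of bit strings\<close>

definition pad :: "nat \<Rightarrow> bool list \<Rightarrow> bool list" where
  "pad b xs = take b (xs @ replicate b False)"

lemma length_pad[simp]: "length (pad b xs) = b" unfolding pad_def by simp

lemma pad_append: "length xs = b \<Longrightarrow> pad b (xs @ ys) = xs" unfolding pad_def by simp

fun idx :: "'a list \<Rightarrow> 'a \<Rightarrow> nat" where
  "idx [] x = 0"
| "idx (y # ys) x = (if y = x then 0 else Suc (idx ys x))"

lemma idx_nth: "x \<in> set L \<Longrightarrow> idx L x < length L \<and> L ! idx L x = x"
  by (induction L) auto

definition slot :: "nat \<Rightarrow> 'a list \<Rightarrow> 'a \<Rightarrow> bool list \<Rightarrow> bool list" where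
  "slot b L i msg = pad b (drop (b * idx L i) msg)"

lemma drop_concat_uniform:
  "(\<forall>y\<in>set L. length (g y) = b) \<Longrightarrow> k \<le> length L \<Longrightarrow>
    drop (b * k) (concat (map g L)) = concat (map g (drop k L))"
proof (induction L arbitrary: k)
  case Nil then show ?case by simp
next
  case (Cons y L)
  show ?case
  proof (cases k)
    case 0 then show ?thesis by simp
  next
    case (Suc k')
    have "drop (b * k) (concat (map g (y # L))) = drop (b * k') (concat (map g L))"
      using Cons.prems Suc by (simp add: add.commute)
    then show ?thesis using Cons Suc by simp
  qed
qed

lemma slot_concat:
  assumes "\<forall>y\<in>set L. length (g y) = b" "i \<in> set L"
  shows "slot b L i (concat (map g L)) = g i"
proof -
  have k: "idx L i < length L" and ki: "L ! idx L i = i" using idx_nth[OF assms(2)] by auto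
  have "drop (idx L i) L = L ! idx L i # drop (Suc (idx L i)) L"
    by (rule Cons_nth_drop_Suc[OF k, symmetric])
  then have "drop (idx L i) L = i # drop (Suc (idx L i)) L" using ki by simp
  then have "drop (b * idx L i) (concat (map g L)) = g i @ concat (map g (drop (Suc (idx L i)) L))"
    using drop_concat_uniform[OF assms(1), of "idx L i"] k assms(2) by simp
  then show ?thesis unfolding slot_def using assms by (simp add: pad_append)
qed

lemma length_concat_uniform: "(\<forall>y\<in>set L. length (g y) = b) \<Longrightarrow> length (concat (map g L)) = b * length L"
  by (induction L) auto

definition chunk :: "nat \<Rightarrow> bool list \<Rightarrow> nat \<Rightarrow> bool list" where
  "chunk b S k = pad b (drop (k * b) S)"

lemma pad_nth: "i < b \<Longrightarrow> pad b X ! i = (if i < length X then X ! i else False)"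
  unfolding pad_def by (simp add: nth_append)

lemma chunk_prefix:
  assumes S: "S = P @ Z" and m: "min (length S) ((Suc k) * b) \<le> length P"
  shows "pad b (drop (k * b) P) = chunk b S k"
proof (rule nth_equalityI)
  show "length (pad b (drop (k * b) P)) = length (chunk b S k)" unfolding chunk_def by simp
next
  fix i assume "i < length (pad b (drop (k * b) P))"
  then have i: "i < b" by simp
  show "pad b (drop (k * b) P) ! i = chunk b S k ! i"
  proof (cases "k * b + i < length P")
    case True
    then show ?thesis unfolding chunk_def using i S by (simp add: pad_nth nth_append)
  next
    case False
    have "\<not> (k * b + i < length S)"
    proof
      assume "k * b + i < length S"
      then have "length P < length S" using False by simp
      then have "Suc k * b \<le> length P" using m by simp
      then show False using False i by simp
    qed
    then show ?thesis unfolding chunk_def using i False by (auto simp: pad_nth)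
  qed
qed

definition bit_at :: "bool list \<Rightarrow> nat \<Rightarrow> bool" where
  "bit_at S j = (if j < length S then S ! j else False)"

lemma chunk_bit_at: "chunk b S k = map (\<lambda>i. bit_at S (k * b + i)) [0..<b]"
  by (rule nth_equalityI) (auto simp: chunk_def pad_def bit_at_def nth_append)

lemma take_pad_bit_at: "take n (S @ replicate n False) = map (bit_at S) [0..<n]"
  by (rule nth_equalityI) (auto simp: bit_at_def nth_append)

lemma concat_chunks_bit_at:
  "concat (map (chunk b S) [0..<n]) = map (bit_at S) [0..<n * b]"
proof (induction n)
  case 0 then show ?case by simp
next
  case (Suc n)
  have u: "[0..<n * b + b] = [0..<n * b] @ [n * b..<n * b + b]"
    by (rule upt_add_eq_append) simp
  have m: "map (bit_at S) [n * b..<n * b + b] = chunk b S n"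
    unfolding chunk_bit_at by (rule nth_equalityI) auto
  have "map (bit_at S) [0..<Suc n * b] = map (bit_at S) [0..<n * b] @ chunk b S n"
    using u m by (simp add: add.commute)
  then show ?case using Suc by simp
qed

lemma concat_chunks:
  "concat (map (chunk b S) [0..<n]) = take (n * b) (S @ replicate (n * b) False)"
  unfolding concat_chunks_bit_at take_pad_bit_at ..

section \<open>Framed streams\<close>

text \<open>Every report in a stream is preceded by a True bit and the stream ends with a False
bit, so that a node can concatenate streams of unknown length and cut them apart again.
The flag returned by scan_frames tells whether the end of the stream has been read.\<close>

definition frame :: "bool list \<Rightarrow> bool list" where "frame it = True # it"

abbreviation "frames xs \<equiv> concat (map frame xs)"

fun scan_frames :: "nat \<Rightarrow> bool list \<Rightarrow> bool list \<times> bool" where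
  "scan_frames L [] = ([], False)"
| "scan_frames L (False # r) = ([], True)"
| "scan_frames L (True # r) = (case scan_frames L (drop L r) of (x, c) \<Rightarrow> (True # take L r @ x, c))"

fun split_frames :: "nat \<Rightarrow> bool list \<Rightarrow> bool list list" where
  "split_frames L [] = []"
| "split_frames L (y # ys) = take L ys # split_frames L (drop L ys)"

lemma split_frames_concat: "(\<forall>it\<in>set xs. length it = L) \<Longrightarrow> split_frames L (frames xs) = xs"
  by (induction xs) (auto simp: frame_def)

lemma scan_frames_take:
  "(\<forall>it\<in>set xs. length it = L) \<Longrightarrow>
   scan_frames L (take n (frames xs @ False # F)) = (if length (frames xs) < n then (frames xs, True) else (take n (frames xs), False))"
proof (induction xs arbitrary: n)
  case Nil
  then show ?case by (cases n) auto
next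
  case (Cons it xs)
  have li: "length it = L" using Cons.prems by simp
  have IH: "\<And>n. scan_frames L (take n (frames xs @ False # F)) = (if length (frames xs) < n then (frames xs, True) else (take n (frames xs), False))"
    using Cons by simp
  show ?case
  proof (cases n)
    case 0 then show ?thesis by simp
  next
    case (Suc n')
    let ?Y = "frames xs @ False # F"
    have e: "take n (frames (it # xs) @ False # F) = True # take n' (it @ ?Y)" using Suc by (simp add: frame_def)
    have t1: "take L (take n' (it @ ?Y)) = take n' it" using li by (simp add: min_def)
    have dl: "drop L (it @ ?Y) = ?Y" using li by simp
    have t2: "drop L (take n' (it @ ?Y)) = take (n' - L) ?Y" by (metis drop_take dl)
    show ?thesis
    proof (cases "n' < L")
      case True
      then have "n' - L = 0" by simp
      then have "scan_frames L (take n (frames (it # xs) @ False # F)) = (True # take n' it, False)"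
        using e t1 t2 by simp
      moreover have "\<not> length (frames (it # xs)) < n" using True Suc li by (simp add: frame_def)
      moreover have "take n (frames (it # xs)) = True # take n' it" using True Suc li by (simp add: frame_def)
      ultimately show ?thesis by simp
    next
      case False
      have "scan_frames L (take n (frames (it # xs) @ False # F)) =
            (case scan_frames L (take (n' - L) ?Y) of (x, c) \<Rightarrow> (True # it @ x, c))"
        using e t1 t2 False li by simp
      also have "\<dots> = (if length (frames xs) < n' - L then (True # it @ frames xs, True) else (True # it @ take (n' - L) (frames xs), False))"
        using IH[of "n' - L"] by simp
      also have "\<dots> = (if length (frames (it # xs)) < n then (frames (it # xs), True) else (take n (frames (it # xs)), False))"
        using False Suc li by (auto simp: frame_def)
      finally show ?thesis .
    qed
  qed
qed

text \<open>join_streams concatenates streams received so far, stopping at the first one whose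
end has not yet arrived; the result is a prefix of the concatenated full streams.\<close>

fun join_streams :: "nat \<Rightarrow> bool list list \<Rightarrow> bool list" where
  "join_streams L [] = [False]"
| "join_streams L (r # rs) = (case scan_frames L r of (x, c) \<Rightarrow> if c then x @ join_streams L rs else x)"

lemma join_streams_prefix:
  "(\<forall>xs\<in>set xss. \<forall>it\<in>set xs. length it = L) \<Longrightarrow>
   (\<exists>Z. concat (map frames xss) @ [False] = join_streams L (map (\<lambda>xs. take n (frames xs @ False # replicate n False)) xss) @ Z)
   \<and> min (length (concat (map frames xss)) + 1) n \<le> length (join_streams L (map (\<lambda>xs. take n (frames xs @ False # replicate n False)) xss))"
proof (induction xss)
  case Nil then show ?case by simp
next
  case (Cons xs xss)
  have l: "\<forall>it\<in>set xs. length it = L" using Cons.prems by simp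
  have IH: "(\<exists>Z. concat (map frames xss) @ [False] = join_streams L (map (\<lambda>xs. take n (frames xs @ False # replicate n False)) xss) @ Z)
   \<and> min (length (concat (map frames xss)) + 1) n \<le> length (join_streams L (map (\<lambda>xs. take n (frames xs @ False # replicate n False)) xss))"
    using Cons by simp
  note scan = scan_frames_take[OF l, of n "replicate n False"]
  show ?case
  proof (cases "length (frames xs) < n")
    case True
    then show ?thesis using scan IH by auto
  next
    case False
    then have K: "join_streams L (map (\<lambda>xs. take n (frames xs @ False # replicate n False)) (xs # xss)) = take n (frames xs)"
      using scan by simp
    have C: "concat (map frames (xs # xss)) @ [False] = take n (frames xs) @ (drop n (frames xs) @ concat (map frames xss) @ [False])"
      by simp
    have ln: "length (take n (frames xs)) = n" using False by simp
    show ?thesis unfolding K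
    proof (intro conjI exI[of _ "drop n (frames xs) @ concat (map frames xss) @ [False]"])
      show "concat (map frames (xs # xss)) @ [False] = take n (frames xs) @ drop n (frames xs) @ concat (map frames xss) @ [False]"
        by (rule C)
      show "min (length (concat (map frames (xs # xss))) + 1) n \<le> length (take n (frames xs))" using ln by simp
    qed
  qed
qed


lemma distinct_concat_map:
  "distinct xs \<Longrightarrow> (\<forall>x\<in>set xs. distinct (g x)) \<Longrightarrow>
   (\<forall>x\<in>set xs. \<forall>y\<in>set xs. x \<noteq> y \<longrightarrow> set (g x) \<inter> set (g y) = {}) \<Longrightarrow> distinct (concat (map g xs))"
  by (induction xs) auto

lemma concat_concat: "concat (concat xss) = concat (map concat xss)"
  by (induction xss) auto

lemma length_frames: "\<forall>it\<in>set xs. length it = l \<Longrightarrow> length (frames xs) = (l + 1) * length xs"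
  by (induction xs) (auto simp: frame_def)

lemma min_add_le_add: "min (y + 1) n \<le> (z::nat) \<Longrightarrow> min (x + y + 1) n \<le> x + z"
  by (simp add: min_def split: if_splits)

lemma chunk_join_streams:
  assumes "\<forall>xs\<in>set xss. \<forall>it\<in>set xs. length it = L" "n = Suc k * b"
  shows "pad b (drop (k * b) (F @ join_streams L (map (\<lambda>xs. take n (frames xs @ False # replicate n False)) xss)))
    = chunk b (F @ concat (map frames xss) @ [False]) k"
proof -
  let ?J = "join_streams L (map (\<lambda>xs. take n (frames xs @ False # replicate n False)) xss)"
  note prefix = join_streams_prefix[OF assms(1), of n]
  then obtain Z where "concat (map frames xss) @ [False] = ?J @ Z" by blast
  then have "F @ concat (map frames xss) @ [False] = (F @ ?J) @ Z" by simp
  moreover have "min (length (F @ concat (map frames xss) @ [False])) (Suc k * b) \<le> length (F @ ?J)"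
    using min_add_le_add[of "length (concat (map frames xss))" n "length ?J" "length F"] prefix assms(2) by simp
  ultimately show ?thesis by (rule chunk_prefix)
qed

section \<open>Distances and BFS trees\<close>

lemma dist_relpow: "(u,w) \<in> E ^^ k \<Longrightarrow> (u,w) \<in> E ^^ (dist E u w) \<and> dist E u w \<le> k"
  unfolding dist_def by (metis LeastI Least_le)

lemma sym_relpow_iff: "sym E \<Longrightarrow> (u,w) \<in> E ^^ k \<longleftrightarrow> (w,u) \<in> E ^^ k"
proof (induction k arbitrary: w)
  case 0 then show ?case by auto
next
  case (Suc k)
  show ?case
  proof
    assume "(u,w) \<in> E^^Suc k"
    then obtain y where "(u,y) \<in> E^^k" "(y,w) \<in> E" by auto
    then have "(y,u) \<in> E^^k" "(w,y) \<in> E" using Suc by (auto dest: symD)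
    then show "(w,u) \<in> E^^Suc k" by (meson relpow_Suc_I2)
  next
    assume "(w,u) \<in> E^^Suc k"
    then obtain y where "(w,y) \<in> E" "(y,u) \<in> E^^k" by (meson relpow_Suc_D2)
    then have "(u,y) \<in> E^^k" "(y,w) \<in> E" using Suc by (auto dest: symD)
    then show "(u,w) \<in> E^^Suc k" by auto
  qed
qed

lemma dist_sym: "sym E \<Longrightarrow> dist E u w = dist E w u"
  unfolding dist_def using sym_relpow_iff by metis

lemma dist_self: "dist E u u = 0"
  unfolding dist_def by (rule Least_eq_0) simp

lemma dist_eq_0_imp_eq: "(u,w) \<in> E ^^ k \<Longrightarrow> dist E u w = 0 \<Longrightarrow> u = w"
proof -
  assume a: "(u,w) \<in> E ^^ k" "dist E u w = 0"
  from dist_relpow[OF a(1)] a(2) show "u = w" by simp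
qed

lemma dist_relpow_edge: "(x,u) \<in> E ^^ k \<Longrightarrow> (u,v) \<in> E \<Longrightarrow> dist E x v \<le> dist E x u + 1"
proof -
  assume a: "(x,u) \<in> E ^^ k" "(u,v) \<in> E"
  then have "(x,u) \<in> E ^^ dist E x u" using dist_relpow by metis
  then have "(x,v) \<in> E ^^ Suc (dist E x u)" using a by auto
  then show ?thesis using dist_relpow by fastforce
qed

locale bfs_instance =
  fixes V E deg pt Q idf Tr s lam a
  assumes hyps: "setting V E deg pt Q idf Tr s lam a"
begin

lemma connected_graph: "simple_connected_graph V E" and ports_ok: "port_numbering V E deg pt" and Q_sub_V: "Q \<subseteq> V"
  and card_Q_ball_le: "\<And>v. v \<in> V \<Longrightarrow> card (nbhd E (s - 1) v Q) \<le> lam"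
  and bfs_trees: "\<And>r. r \<in> Q \<Longrightarrow> bfs_tree V E s r (Tr r)"
  and id_length: "\<And>v. v \<in> V \<Longrightarrow> length (idf v) = a"
  and id_inj: "\<And>v. v \<in> V \<Longrightarrow> inj_on idf (nbhd E s v V)"
  using hyps unfolding setting_def by blast+

lemma finite_V: "finite V" and E_sub: "E \<subseteq> V \<times> V" and sym_E: "sym E"
  and connected: "u \<in> V \<Longrightarrow> w \<in> V \<Longrightarrow> (u,w) \<in> E\<^sup>*"
  using connected_graph unfolding simple_connected_graph_def by blast+

lemma connected_relpow: "u \<in> V \<Longrightarrow> w \<in> V \<Longrightarrow> \<exists>k. (u,w) \<in> E^^k"
  by (rule rtrancl_imp_relpow[OF connected])

lemma dist_commute: "dist E u w = dist E w u" by (rule dist_sym[OF sym_E])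

lemma dist_edge_le: "x \<in> V \<Longrightarrow> u \<in> V \<Longrightarrow> (u,v) \<in> E \<Longrightarrow> dist E x v \<le> dist E x u + 1"
proof -
  assume a: "x \<in> V" "u \<in> V" "(u,v) \<in> E"
  obtain k where "(x,u) \<in> E^^k" using connected_relpow[OF a(1,2)] by blast
  then show ?thesis using dist_relpow_edge a(3) by metis
qed

lemma dist_eq_0_iff: "u \<in> V \<Longrightarrow> w \<in> V \<Longrightarrow> dist E u w = 0 \<longleftrightarrow> u = w"
proof
  assume "u \<in> V" "w \<in> V" "dist E u w = 0"
  then show "u = w" using connected_relpow dist_eq_0_imp_eq by metis
qed (simp add: dist_self)

lemma edge_in_V: "(u,v) \<in> E \<Longrightarrow> u \<in> V \<and> v \<in> V" using E_sub by auto

lemma edge_sym: "(u,v) \<in> E \<Longrightarrow> (v,u) \<in> E" using sym_E by (auto dest: symD)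

lemma dist_edge_bounds: "x \<in> V \<Longrightarrow> (u,v) \<in> E \<Longrightarrow> dist E x v \<le> dist E x u + 1 \<and> dist E x u \<le> dist E x v + 1"
proof -
  assume "x \<in> V" "(u,v) \<in> E"
  then show ?thesis using dist_edge_le[of x u v] dist_edge_le[of x v u] edge_in_V[of u v] edge_sym[of u v] by simp
qed

context
  fixes w assumes wQ: "w \<in> Q"
begin

abbreviation "T \<equiv> Tr w"
abbreviation "N \<equiv> nbhd E s w V"

lemma root_in_V: "w \<in> V" using wQ Q_sub_V by auto

lemma tree_sub_E: "T \<subseteq> E" and sym_tree: "sym T" and tree_sub_ball: "T \<subseteq> N \<times> N"
  and tree_dist: "c \<in> N \<Longrightarrow> (c,w) \<in> T\<^sup>* \<and> dist T c w = dist E c w"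
  and card_tree: "card T = 2 * (card N - 1)"
  using bfs_trees[OF wQ] unfolding bfs_tree_def by auto

lemma finite_ball: "finite N" using finite_V unfolding nbhd_def by auto
lemma finite_tree: "finite T" using finite_ball tree_sub_ball finite_subset by blast
lemma root_in_ball: "w \<in> N" using root_in_V dist_self unfolding nbhd_def by auto

lemma tree_parent_exists:
  assumes c: "c \<in> V" "dist E w c \<le> s" "c \<noteq> w"
  shows "\<exists>u. (c,u) \<in> T \<and> dist E w u + 1 = dist E w c"
proof -
  have cN: "c \<in> N" using c unfolding nbhd_def by auto
  have tc: "(c,w) \<in> T\<^sup>*" and te: "dist T c w = dist E c w" using tree_dist[OF cN] by auto
  obtain k where "(c,w) \<in> T^^k" using rtrancl_imp_relpow[OF tc] by blast
  then have cw: "(c,w) \<in> T ^^ dist T c w" using dist_relpow by metis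
  have "dist E w c \<noteq> 0" using dist_eq_0_iff[OF root_in_V c(1)] c(3) by simp
  then have "dist E c w \<noteq> 0" by (simp add: dist_commute)
  then obtain d' where dd: "dist T c w = Suc d'" using te not0_implies_Suc by metis
  then have "(c,w) \<in> T ^^ Suc d'" using cw by simp
  then obtain u where cu: "(c,u) \<in> T" and uw: "(u,w) \<in> T^^d'" using relpow_Suc_D2 by metis
  have uN: "u \<in> N" using cu tree_sub_ball by auto
  have "dist T u w \<le> d'" using uw dist_relpow by metis
  then have le: "dist E u w \<le> d'" using tree_dist[OF uN] by simp
  have "(u,c) \<in> E" using cu tree_sub_E edge_sym by auto
  then have "dist E w c \<le> dist E w u + 1" using dist_edge_le[OF root_in_V _ \<open>(u,c) \<in> E\<close>] edge_in_V[of u c] by simp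
  moreover have "dist E w c = Suc d'" using dd te dist_commute[of c w] by simp
  moreover have "dist E w u \<le> d'" using le dist_commute[of u w] by simp
  ultimately have "dist E w u + 1 = dist E w c" by simp
  then show ?thesis using cu by blast
qed

text \<open>The tree has card N - 1 edges and its downward edges already reach every vertex of
N other than w; hence every such vertex has exactly one parent.\<close>

definition "downward_edges = {(c,u). (c,u) \<in> T \<and> dist E w u + 1 = dist E w c}"

lemma downward_edges_unique:
  assumes "(c,u1) \<in> downward_edges" "(c,u2) \<in> downward_edges" shows "u1 = u2"
proof -
  have fd: "finite downward_edges" using finite_tree unfolding downward_edges_def
    by (rule rev_finite_subset) auto
  have dis: "downward_edges \<inter> downward_edges\<inverse> = {}" unfolding downward_edges_def by auto
  have sub: "downward_edges \<union> downward_edges\<inverse> \<subseteq> T" using sym_tree unfolding downward_edges_def by (auto dest: symD)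
  have "card (downward_edges \<union> downward_edges\<inverse>) = 2 * card downward_edges"
    using card_Un_disjoint[OF fd _ dis] fd by (simp add: card_inverse)
  then have c1: "2 * card downward_edges \<le> 2 * (card N - 1)" using card_mono[OF finite_tree sub] card_tree by simp
  have img: "fst ` downward_edges = N - {w}"
  proof
    show "fst ` downward_edges \<subseteq> N - {w}"
    proof
      fix c assume "c \<in> fst ` downward_edges"
      then obtain u where cu: "(c,u) \<in> T" "dist E w u + 1 = dist E w c" unfolding downward_edges_def by auto
      then have "c \<in> N" using tree_sub_ball by auto
      moreover have "c \<noteq> w" using cu dist_self by (metis add_is_0 one_neq_zero)
      ultimately show "c \<in> N - {w}" by auto
    qed
  next
    show "N - {w} \<subseteq> fst ` downward_edges"
    proof
      fix c assume "c \<in> N - {w}"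
      then have "c \<in> V" "dist E w c \<le> s" "c \<noteq> w" unfolding nbhd_def by auto
      then obtain u where "(c,u) \<in> T \<and> dist E w u + 1 = dist E w c" using tree_parent_exists by blast
      then show "c \<in> fst ` downward_edges" unfolding downward_edges_def by force
    qed
  qed
  have "card (fst ` downward_edges) = card N - 1" using img finite_ball root_in_ball by simp
  moreover have "card (fst ` downward_edges) \<le> card downward_edges" using fd card_image_le by blast
  ultimately have "card (fst ` downward_edges) = card downward_edges" using c1 by simp
  then have "inj_on fst downward_edges" using fd eq_card_imp_inj_on by blast
  then show ?thesis using assms inj_onD by fastforce
qed

abbreviation "par c \<equiv> tree_parent E w T c"

lemma tree_parent_eqI:
  assumes "(c,u) \<in> T" "dist E w u + 1 = dist E w c"
  shows "par c = u"
  unfolding tree_parent_def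
proof (rule the_equality)
  show "(c, u) \<in> T \<and> dist E w u + 1 = dist E w c" using assms by simp
next
  fix y assume "(c, y) \<in> T \<and> dist E w y + 1 = dist E w c"
  then have "(c,y) \<in> downward_edges" "(c,u) \<in> downward_edges" using assms unfolding downward_edges_def by auto
  then show "y = u" by (rule downward_edges_unique)
qed

lemma tree_parent_props:
  assumes c: "c \<in> V" "dist E w c \<le> s" "c \<noteq> w"
  shows "(c, par c) \<in> T \<and> dist E w (par c) + 1 = dist E w c"
proof -
  obtain u where u: "(c,u) \<in> T" "dist E w u + 1 = dist E w c" using tree_parent_exists[OF c] by blast
  have "par c = u" by (rule tree_parent_eqI[OF u])
  then show ?thesis using u by simp
qed

end
end

section \<open>Local inputs\<close>

text \<open>Trees are addressed by their root's identifier. The slots of a message on port p are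
laid out in the order of child_port_ids x p at the sender and of parent_port_ids x p at the
receiver; both lists coincide by parent_port_ids_eq_child_port_ids.\<close>

definition input_roots :: "node_input \<Rightarrow> bool list set" where "input_roots x = fst ` trees x"
definition input_parent_port :: "node_input \<Rightarrow> bool list \<Rightarrow> nat option" where
  "input_parent_port x i = (THE pp. \<exists>ch. (i,pp,ch) \<in> trees x)"
definition input_child_ports :: "node_input \<Rightarrow> bool list \<Rightarrow> nat set" where
  "input_child_ports x i = (THE ch. \<exists>pp. (i,pp,ch) \<in> trees x)"
definition child_port_ids :: "node_input \<Rightarrow> nat \<Rightarrow> bool list list" where
  "child_port_ids x p = sorted_list_of_set {i \<in> input_roots x. p \<in> input_child_ports x i}"
definition parent_port_ids :: "node_input \<Rightarrow> nat \<Rightarrow> bool list list" where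
  "parent_port_ids x p = sorted_list_of_set {i \<in> input_roots x. input_parent_port x i = Some p}"
definition input_payload :: "node_input \<Rightarrow> bool list \<Rightarrow> bool list" where
  "input_payload x i = (THE mm. (i, mm) \<in> payload x)"

context bfs_instance begin

lemma port_bij: "v \<in> V \<Longrightarrow> bij_betw (pt v) {..<deg v} {w. (v, w) \<in> E}"
  using ports_ok unfolding port_numbering_def by blast

lemma port_edge: "v \<in> V \<Longrightarrow> p < deg v \<Longrightarrow> (v, pt v p) \<in> E"
  using bij_betwE[OF port_bij] by blast

lemma port_in_V: "v \<in> V \<Longrightarrow> p < deg v \<Longrightarrow> pt v p \<in> V"
  using port_edge edge_in_V by blast

lemma port_of_pt: "v \<in> V \<Longrightarrow> p < deg v \<Longrightarrow> port_of deg pt v (pt v p) = p"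
  unfolding port_of_def
proof (rule the_equality)
  assume "v \<in> V" "p < deg v" then show "p < deg v \<and> pt v p = pt v p" by simp
next
  fix q assume a: "v \<in> V" "p < deg v" "q < deg v \<and> pt v q = pt v p"
  then show "q = p" using bij_betw_imp_inj_on[OF port_bij[OF a(1)]] inj_onD by fastforce
qed

lemma port_of_edge: "v \<in> V \<Longrightarrow> (v,u) \<in> E \<Longrightarrow> port_of deg pt v u < deg v \<and> pt v (port_of deg pt v u) = u"
proof -
  assume a: "v \<in> V" "(v,u) \<in> E"
  then have "u \<in> pt v ` {..<deg v}" using bij_betw_imp_surj_on[OF port_bij[OF a(1)]] by blast
  then obtain p where p: "p < deg v" "u = pt v p" by auto
  then show ?thesis using port_of_pt[OF a(1) p(1)] by simp
qed

definition "near_roots v = {r \<in> Q. dist E r v \<le> s}"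

definition "parent_port v r = (if v = r then None else Some (port_of deg pt v (tree_parent E r (Tr r) v)))"
definition "child_ports v r = {p. p < deg v \<and> (v, pt v p) \<in> Tr r \<and> dist E r (pt v p) = dist E r v + 1}"

abbreviation "inp pay \<equiv> mk_input V E deg pt Q idf Tr s pay"

lemma trees_input: "trees (inp pay v) = {(idf r, parent_port v r, child_ports v r) | r. r \<in> near_roots v}"
  unfolding mk_input_def near_roots_def parent_port_def child_ports_def by simp

lemma near_root_in_ball: "v \<in> V \<Longrightarrow> r \<in> near_roots v \<Longrightarrow> r \<in> nbhd E s v V"
  unfolding near_roots_def nbhd_def using Q_sub_V dist_commute by auto

lemma near_roots_id_inj: "v \<in> V \<Longrightarrow> r \<in> near_roots v \<Longrightarrow> r' \<in> near_roots v \<Longrightarrow> idf r = idf r' \<Longrightarrow> r = r'"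
  using id_inj near_root_in_ball inj_onD by metis

lemma input_roots_input: "input_roots (inp pay v) = idf ` near_roots v"
  unfolding input_roots_def trees_input by force

lemma input_parent_port_input: "v \<in> V \<Longrightarrow> r \<in> near_roots v \<Longrightarrow> input_parent_port (inp pay v) (idf r) = parent_port v r"
  unfolding input_parent_port_def trees_input
proof (rule the_equality)
  assume "v \<in> V" "r \<in> near_roots v" then show "\<exists>ch. (idf r, parent_port v r, ch) \<in> {(idf r, parent_port v r, child_ports v r) |r. r \<in> near_roots v}" by blast
next
  fix pp assume a: "v \<in> V" "r \<in> near_roots v" "\<exists>ch. (idf r, pp, ch) \<in> {(idf r, parent_port v r, child_ports v r) |r. r \<in> near_roots v}"
  then obtain r' where "r' \<in> near_roots v" "idf r = idf r'" "pp = parent_port v r'" by auto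
  then show "pp = parent_port v r" using near_roots_id_inj a(1,2) by metis
qed

lemma input_child_ports_input: "v \<in> V \<Longrightarrow> r \<in> near_roots v \<Longrightarrow> input_child_ports (inp pay v) (idf r) = child_ports v r"
  unfolding input_child_ports_def trees_input
proof (rule the_equality)
  assume "v \<in> V" "r \<in> near_roots v" then show "\<exists>pp. (idf r, pp, child_ports v r) \<in> {(idf r, parent_port v r, child_ports v r) |r. r \<in> near_roots v}" by blast
next
  fix ch assume a: "v \<in> V" "r \<in> near_roots v" "\<exists>pp. (idf r, pp, ch) \<in> {(idf r, parent_port v r, child_ports v r) |r. r \<in> near_roots v}"
  then obtain r' where "r' \<in> near_roots v" "idf r = idf r'" "ch = child_ports v r'" by auto
  then show "ch = child_ports v r" using near_roots_id_inj a(1,2) by metis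
qed

lemma finite_near_roots: "finite (near_roots v)" using finite_V Q_sub_V unfolding near_roots_def by (auto intro: finite_subset)

lemma child_port_ids_input: "v \<in> V \<Longrightarrow> child_port_ids (inp pay v) p = sorted_list_of_set (idf ` {r \<in> near_roots v. p \<in> child_ports v r})"
proof -
  assume v: "v \<in> V"
  have "{i \<in> input_roots (inp pay v). p \<in> input_child_ports (inp pay v) i} = idf ` {r \<in> near_roots v. p \<in> child_ports v r}"
    unfolding input_roots_input using input_child_ports_input[OF v] by auto
  then show ?thesis unfolding child_port_ids_def by simp
qed

lemma parent_port_ids_input: "v \<in> V \<Longrightarrow> parent_port_ids (inp pay v) p = sorted_list_of_set (idf ` {r \<in> near_roots v. parent_port v r = Some p})"
proof -
  assume v: "v \<in> V"
  have "{i \<in> input_roots (inp pay v). input_parent_port (inp pay v) i = Some p} = idf ` {r \<in> near_roots v. parent_port v r = Some p}"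
    unfolding input_roots_input using input_parent_port_input[OF v] by auto
  then show ?thesis unfolding parent_port_ids_def by simp
qed

lemma tree_parent_edge:
  assumes "r \<in> Q" "v \<in> V" "dist E r v \<le> s" "v \<noteq> r"
  shows "(v, tree_parent E r (Tr r) v) \<in> E \<and> dist E r (tree_parent E r (Tr r) v) + 1 = dist E r v
     \<and> (v, tree_parent E r (Tr r) v) \<in> Tr r"
  using tree_parent_props[OF assms(1) assms(2-4)] tree_sub_E[OF assms(1)] by blast

lemma parent_port_eq_Some_iff:
  assumes v: "v \<in> V" "r \<in> near_roots v" "(v,u) \<in> E"
  shows "parent_port v r = Some (port_of deg pt v u) \<longleftrightarrow> v \<noteq> r \<and> (v,u) \<in> Tr r \<and> dist E r u + 1 = dist E r v"
proof
  assume a: "parent_port v r = Some (port_of deg pt v u)"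
  then have ne: "v \<noteq> r" unfolding parent_port_def by (auto split: if_splits)
  have rQ: "r \<in> Q" and ds: "dist E r v \<le> s" using v(2) unfolding near_roots_def by auto
  let ?y = "tree_parent E r (Tr r) v"
  have y: "(v, ?y) \<in> E" "dist E r ?y + 1 = dist E r v" "(v, ?y) \<in> Tr r" using tree_parent_edge[OF rQ v(1) ds ne] by auto
  have "port_of deg pt v ?y = port_of deg pt v u" using a ne unfolding parent_port_def by simp
  then have "?y = u" using port_of_edge[OF v(1) y(1)] port_of_edge[OF v(1) v(3)] by metis
  then show "v \<noteq> r \<and> (v,u) \<in> Tr r \<and> dist E r u + 1 = dist E r v" using y ne by simp
next
  assume a: "v \<noteq> r \<and> (v,u) \<in> Tr r \<and> dist E r u + 1 = dist E r v"
  have rQ: "r \<in> Q" using v(2) unfolding near_roots_def by auto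
  have "tree_parent E r (Tr r) v = u" using tree_parent_eqI[OF rQ] a by blast
  then show "parent_port v r = Some (port_of deg pt v u)" unfolding parent_port_def using a by simp
qed

lemma port_in_child_ports_iff:
  assumes "u \<in> V" "(u,v) \<in> E"
  shows "port_of deg pt u v \<in> child_ports u r \<longleftrightarrow> (u,v) \<in> Tr r \<and> dist E r v = dist E r u + 1"
  using port_of_edge[OF assms] unfolding child_ports_def by auto

lemma tree_edge_near: "r \<in> Q \<Longrightarrow> (x,y) \<in> Tr r \<Longrightarrow> dist E r x \<le> s \<and> dist E r y \<le> s \<and> x \<in> V \<and> y \<in> V"
  using tree_sub_ball unfolding nbhd_def by blast

lemma parent_child_port_roots:
  assumes v: "v \<in> V" "(v,u) \<in> E"
  shows "{r \<in> near_roots v. parent_port v r = Some (port_of deg pt v u)} = {r \<in> near_roots u. port_of deg pt u v \<in> child_ports u r}"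
proof -
  have u: "u \<in> V" "(u,v) \<in> E" using v edge_in_V edge_sym by auto
  show ?thesis
  proof (intro set_eqI iffI)
    fix r assume "r \<in> {r \<in> near_roots v. parent_port v r = Some (port_of deg pt v u)}"
    then have r: "r \<in> near_roots v" "v \<noteq> r" "(v,u) \<in> Tr r" "dist E r u + 1 = dist E r v"
      using parent_port_eq_Some_iff[OF v(1) _ v(2)] by auto
    have rQ: "r \<in> Q" using r(1) unfolding near_roots_def by auto
    have "(u,v) \<in> Tr r" using r(3) sym_tree[OF rQ] by (auto dest: symD)
    moreover have "r \<in> near_roots u" using r(1,4) unfolding near_roots_def by auto
    ultimately show "r \<in> {r \<in> near_roots u. port_of deg pt u v \<in> child_ports u r}" using port_in_child_ports_iff[OF u] r(4) by simp
  next
    fix r assume "r \<in> {r \<in> near_roots u. port_of deg pt u v \<in> child_ports u r}"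
    then have r: "r \<in> near_roots u" "(u,v) \<in> Tr r" "dist E r v = dist E r u + 1" using port_in_child_ports_iff[OF u] by auto
    have rQ: "r \<in> Q" using r(1) unfolding near_roots_def by auto
    have vu: "(v,u) \<in> Tr r" using r(2) sym_tree[OF rQ] by (auto dest: symD)
    have "dist E r v \<le> s" using tree_edge_near[OF rQ r(2)] by simp
    then have rv: "r \<in> near_roots v" using rQ unfolding near_roots_def by simp
    have "v \<noteq> r" using r(3) dist_self by (metis add_eq_0_iff_both_eq_0 zero_neq_one)
    then show "r \<in> {r \<in> near_roots v. parent_port v r = Some (port_of deg pt v u)}"
      using parent_port_eq_Some_iff[OF v(1) rv v(2)] vu r(3) rv by simp
  qed
qed

lemma parent_port_ids_eq_child_port_ids:
  assumes "v \<in> V" "(v,u) \<in> E"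
  shows "parent_port_ids (inp pay v) (port_of deg pt v u) = child_port_ids (inp pay u) (port_of deg pt u v)"
  using parent_port_ids_input[OF assms(1)] child_port_ids_input parent_child_port_roots[OF assms] edge_in_V[OF assms(2)] by simp

lemma finite_nbhd: "finite (nbhd E k v Q)" using finite_V Q_sub_V unfolding nbhd_def by (auto intro: finite_subset)

lemma length_child_port_ids:
  assumes "v \<in> V" "p < deg v"
  shows "length (child_port_ids (inp pay v) p) \<le> lam"
proof -
  have sub: "{r \<in> near_roots v. p \<in> child_ports v r} \<subseteq> nbhd E (s - 1) v Q"
  proof
    fix r assume "r \<in> {r \<in> near_roots v. p \<in> child_ports v r}"
    then have r: "r \<in> Q" "(v, pt v p) \<in> Tr r" "dist E r (pt v p) = dist E r v + 1"
      unfolding near_roots_def child_ports_def by auto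
    have "dist E r (pt v p) \<le> s" using tree_edge_near[OF r(1,2)] by simp
    then have "dist E v r \<le> s - 1" using r(3) dist_commute[of v r] by simp
    then show "r \<in> nbhd E (s - 1) v Q" using r(1) unfolding nbhd_def by simp
  qed
  have "length (child_port_ids (inp pay v) p) = card (idf ` {r \<in> near_roots v. p \<in> child_ports v r})"
    using child_port_ids_input[OF assms(1)] by simp
  also have "\<dots> \<le> card {r \<in> near_roots v. p \<in> child_ports v r}" by (rule card_image_le) (use finite_near_roots in simp)
  also have "\<dots> \<le> card (nbhd E (s - 1) v Q)" by (rule card_mono[OF finite_nbhd sub])
  also have "\<dots> \<le> lam" by (rule card_Q_ball_le[OF assms(1)])
  finally show ?thesis .
qed

lemma length_parent_port_ids:
  assumes "v \<in> V" "p < deg v"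
  shows "length (parent_port_ids (inp pay v) p) \<le> lam"
proof -
  let ?u = "pt v p"
  have vu: "(v, ?u) \<in> E" using port_edge[OF assms] .
  have po: "port_of deg pt v ?u = p" using port_of_pt[OF assms] .
  have sub: "{r \<in> near_roots v. parent_port v r = Some p} \<subseteq> nbhd E (s - 1) ?u Q"
  proof
    fix r assume "r \<in> {r \<in> near_roots v. parent_port v r = Some p}"
    then have r: "r \<in> near_roots v" "parent_port v r = Some (port_of deg pt v ?u)" using po by auto
    then have "dist E r ?u + 1 = dist E r v" using parent_port_eq_Some_iff[OF assms(1) r(1) vu] by blast
    moreover have "dist E r v \<le> s" "r \<in> Q" using r(1) unfolding near_roots_def by auto
    ultimately show "r \<in> nbhd E (s - 1) ?u Q" unfolding nbhd_def using dist_commute[of ?u r] by simp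
  qed
  have "length (parent_port_ids (inp pay v) p) = card (idf ` {r \<in> near_roots v. parent_port v r = Some p})"
    using parent_port_ids_input[OF assms(1)] by simp
  also have "\<dots> \<le> card {r \<in> near_roots v. parent_port v r = Some p}" by (rule card_image_le) (use finite_near_roots in simp)
  also have "\<dots> \<le> card (nbhd E (s - 1) ?u Q)" by (rule card_mono[OF finite_nbhd sub])
  also have "\<dots> \<le> lam" by (rule card_Q_ball_le[OF port_in_V[OF assms]])
  finally show ?thesis .
qed

lemma id_in_parent_port_ids:
  assumes "v \<in> V" "r \<in> near_roots v" "v \<noteq> r"
  shows "idf r \<in> set (parent_port_ids (inp pay v) (port_of deg pt v (tree_parent E r (Tr r) v)))"
proof -
  have "parent_port v r = Some (port_of deg pt v (tree_parent E r (Tr r) v))" using assms(3) unfolding parent_port_def by simp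
  then show ?thesis using parent_port_ids_input[OF assms(1)] assms(2) finite_near_roots by auto
qed

section \<open>Subtrees of the BFS trees\<close>

text \<open>subtree_Q r c lists the Q-nodes of the subtree of T r below c in the order in which
their reports are streamed; the remaining depth s - dist E r c bounds the recursion.\<close>

definition "tree_children r c = map (pt c) (sorted_list_of_set (child_ports c r))"
definition "own_node c = (if c \<in> Q then [c] else [])"

fun subtree_Q_upto :: "nat \<Rightarrow> nat \<Rightarrow> nat \<Rightarrow> nat list" where
  "subtree_Q_upto r 0 c = own_node c"
| "subtree_Q_upto r (Suc n) c = own_node c @ concat (map (subtree_Q_upto r n) (tree_children r c))"

definition "subtree_Q r c = subtree_Q_upto r (s - dist E r c) c"

lemma finite_child_ports: "finite (child_ports c r)" unfolding child_ports_def by simp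

lemma child_port_props:
  assumes c: "c \<in> V" "r \<in> near_roots c" "q \<in> child_ports c r"
  defines "ci \<equiv> pt c q"
  shows "ci \<in> V \<and> (c,ci) \<in> E \<and> r \<in> near_roots ci \<and> dist E r ci = dist E r c + 1 \<and> ci \<noteq> r
    \<and> tree_parent E r (Tr r) ci = c \<and> q < deg c \<and> port_of deg pt c ci = q"
proof -
  have q: "q < deg c" "(c, ci) \<in> Tr r" "dist E r ci = dist E r c + 1" using c(3) unfolding child_ports_def ci_def by auto
  have rQ: "r \<in> Q" using c(2) unfolding near_roots_def by simp
  have ciV: "ci \<in> V" "dist E r ci \<le> s" using tree_edge_near[OF rQ q(2)] by auto
  have "(ci, c) \<in> Tr r" using q(2) sym_tree[OF rQ] by (auto dest: symD)
  then have "tree_parent E r (Tr r) ci = c" using tree_parent_eqI[OF rQ] q(3) by simp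
  moreover have "ci \<noteq> r" using q(3) dist_self by (metis add_is_0 one_neq_zero)
  moreover have "(c, ci) \<in> E" using port_edge[OF c(1) q(1)] ci_def by simp
  moreover have "port_of deg pt c ci = q" using port_of_pt[OF c(1) q(1)] ci_def by simp
  ultimately show ?thesis using q ciV rQ unfolding near_roots_def by simp
qed

lemma in_tree_children: "c \<in> V \<Longrightarrow> r \<in> near_roots c \<Longrightarrow> ci \<in> set (tree_children r c) \<Longrightarrow> \<exists>q \<in> child_ports c r. ci = pt c q"
  unfolding tree_children_def using finite_child_ports by auto

lemma subtree_Q_unfold:
  assumes c: "c \<in> V" "r \<in> near_roots c"
  shows "subtree_Q r c = own_node c @ concat (map (subtree_Q r) (tree_children r c))"
proof (cases "dist E r c < s")
  case True
  then obtain n where n: "s - dist E r c = Suc n" by (metis Suc_diff_Suc)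
  have "map (subtree_Q_upto r n) (tree_children r c) = map (subtree_Q r) (tree_children r c)"
  proof (rule map_cong[OF refl])
    fix ci assume "ci \<in> set (tree_children r c)"
    then obtain q where q: "q \<in> child_ports c r" "ci = pt c q" using in_tree_children[OF c] by blast
    have "dist E r ci = dist E r c + 1" using child_port_props[OF c q(1)] q(2) by simp
    then have e: "s - dist E r ci = n" using n by arith
    show "subtree_Q_upto r n ci = subtree_Q r ci" unfolding subtree_Q_def e ..
  qed
  then have "subtree_Q r c = own_node c @ concat (map (subtree_Q_upto r n) (tree_children r c))" unfolding subtree_Q_def using n by simp
  then show ?thesis using \<open>map (subtree_Q_upto r n) (tree_children r c) = map (subtree_Q r) (tree_children r c)\<close> by simp
next
  case False
  have "child_ports c r = {}"
  proof (rule ccontr)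
    assume "child_ports c r \<noteq> {}"
    then obtain q where q: "q \<in> child_ports c r" by blast
    have "r \<in> near_roots (pt c q)" "dist E r (pt c q) = dist E r c + 1" using child_port_props[OF c q] by auto
    then show False using False unfolding near_roots_def by simp
  qed
  then have "tree_children r c = []" unfolding tree_children_def by simp
  moreover have "s - dist E r c = 0" using False by simp
  ultimately show ?thesis unfolding subtree_Q_def by simp
qed

lemma subtree_Q_sound:
  "c \<in> V \<Longrightarrow> r \<in> near_roots c \<Longrightarrow> v \<in> set (subtree_Q r c) \<Longrightarrow>
   v \<in> Q \<and> v \<in> V \<and> dist E r c \<le> dist E r v \<and> dist E r v \<le> s \<and> dist E c v \<le> dist E r v - dist E r c
   \<and> (tree_parent E r (Tr r) ^^ (dist E r v - dist E r c)) v = c"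
proof (induction "s - dist E r c" arbitrary: c rule: less_induct)
  case less
  have "v \<in> set (own_node c) \<or> (\<exists>ci \<in> set (tree_children r c). v \<in> set (subtree_Q r ci))"
    using less.prems(3) subtree_Q_unfold[OF less.prems(1,2)] by auto
  then show ?case
  proof
    assume "v \<in> set (own_node c)"
    then have "v = c" "c \<in> Q" unfolding own_node_def by (auto split: if_splits)
    then show ?thesis using less.prems(1,2) dist_self unfolding near_roots_def by simp
  next
    assume "\<exists>ci \<in> set (tree_children r c). v \<in> set (subtree_Q r ci)"
    then obtain q where q: "q \<in> child_ports c r" "v \<in> set (subtree_Q r (pt c q))" using in_tree_children[OF less.prems(1,2)] by blast
    define ci where "ci = pt c q"
    note C = child_port_props[OF less.prems(1,2) q(1), folded ci_def]
    have lt: "s - dist E r ci < s - dist E r c" using C unfolding near_roots_def by auto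
    have IH: "v \<in> Q \<and> v \<in> V \<and> dist E r ci \<le> dist E r v \<and> dist E r v \<le> s \<and> dist E ci v \<le> dist E r v - dist E r ci
      \<and> (tree_parent E r (Tr r) ^^ (dist E r v - dist E r ci)) v = ci"
      using less.hyps[OF lt] C q(2) unfolding ci_def by blast
    have "dist E v c \<le> dist E v ci + 1" using dist_edge_bounds[of v ci c] C IH edge_sym by blast
    moreover have "dist E ci v \<le> dist E r v - dist E r ci" "dist E r ci \<le> dist E r v" using IH by auto
    moreover have "dist E r ci = dist E r c + 1" using C by simp
    moreover have "dist E c v = dist E v c" "dist E ci v = dist E v ci" using dist_commute by auto
    ultimately have d1: "dist E c v \<le> dist E r v - dist E r c" by linarith
    have "dist E r ci \<le> dist E r v" "dist E r ci = dist E r c + 1" using IH C by auto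
    then have e: "dist E r v - dist E r c = Suc (dist E r v - dist E r ci)" by arith
    have "(tree_parent E r (Tr r) ^^ (dist E r v - dist E r c)) v = c"
      unfolding e using IH C by simp
    then show ?thesis using IH C d1 by simp
  qed
qed

lemma tree_child_props:
  assumes "c \<in> V" "r \<in> near_roots c" "ci \<in> set (tree_children r c)"
  shows "ci \<in> V \<and> r \<in> near_roots ci \<and> dist E r ci = dist E r c + 1"
proof -
  obtain q where "q \<in> child_ports c r" "ci = pt c q" using in_tree_children[OF assms] by blast
  then show ?thesis using child_port_props[OF assms(1,2)] by simp
qed

lemma distinct_tree_children:
  assumes "c \<in> V"
  shows "distinct (tree_children r c)"
  unfolding tree_children_def
proof (rule distinct_map[THEN iffD2], intro conjI)
  show "distinct (sorted_list_of_set (child_ports c r))" by simp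
  have "set (sorted_list_of_set (child_ports c r)) \<subseteq> {..<deg c}"
    using finite_child_ports unfolding child_ports_def by auto
  then show "inj_on (pt c) (set (sorted_list_of_set (child_ports c r)))"
    using bij_betw_imp_inj_on[OF port_bij[OF assms]] inj_on_subset by blast
qed

text \<open>Two children of c have the same depth, and that depth determines which of them is
the ancestor of a node of their subtrees.\<close>

lemma subtree_Q_disjoint:
  assumes c: "c \<in> V" "r \<in> near_roots c"
    and xy: "x \<in> set (tree_children r c)" "y \<in> set (tree_children r c)" "x \<noteq> y"
  shows "set (subtree_Q r x) \<inter> set (subtree_Q r y) = {}"
proof (rule ccontr)
  assume "set (subtree_Q r x) \<inter> set (subtree_Q r y) \<noteq> {}"
  then obtain v where v: "v \<in> set (subtree_Q r x)" "v \<in> set (subtree_Q r y)" by blast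
  have x: "x \<in> V" "r \<in> near_roots x" and y: "y \<in> V" "r \<in> near_roots y"
    using tree_child_props[OF c xy(1)] tree_child_props[OF c xy(2)] by auto
  have "(tree_parent E r (Tr r) ^^ (dist E r v - dist E r x)) v = x"
    using subtree_Q_sound[OF x v(1)] by simp
  moreover have "(tree_parent E r (Tr r) ^^ (dist E r v - dist E r y)) v = y"
    using subtree_Q_sound[OF y v(2)] by simp
  moreover have "dist E r x = dist E r y" using tree_child_props[OF c] xy by simp
  ultimately show False using xy(3) by simp
qed

lemma distinct_subtree_Q:
  "c \<in> V \<Longrightarrow> r \<in> near_roots c \<Longrightarrow> distinct (subtree_Q r c)"
proof (induction "s - dist E r c" arbitrary: c rule: less_induct)
  case less
  have "distinct (subtree_Q r ci)" if "ci \<in> set (tree_children r c)" for ci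
  proof -
    note ci = tree_child_props[OF less.prems that]
    then have "s - dist E r ci < s - dist E r c" unfolding near_roots_def by auto
    then show ?thesis using less.hyps ci by blast
  qed
  then have "distinct (concat (map (subtree_Q r) (tree_children r c)))"
    using distinct_concat_map distinct_tree_children subtree_Q_disjoint less.prems by metis
  moreover have "c \<notin> set (subtree_Q r ci)" if "ci \<in> set (tree_children r c)" for ci
  proof
    assume c: "c \<in> set (subtree_Q r ci)"
    note ci = tree_child_props[OF less.prems that]
    then have "dist E r ci \<le> dist E r c" using subtree_Q_sound[OF _ _ c] by blast
    then show False using ci by simp
  qed
  ultimately show ?case unfolding subtree_Q_unfold[OF less.prems] own_node_def by auto
qed

lemma length_subtree_Q:
  assumes "c \<in> V" "r \<in> near_roots c" "c \<noteq> r"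
  shows "length (subtree_Q r c) \<le> lam"
proof -
  have "dist E r c \<noteq> 0" using dist_eq_0_iff[of r c] assms Q_sub_V unfolding near_roots_def by blast
  then have sub: "set (subtree_Q r c) \<subseteq> nbhd E (s - 1) c Q"
    using subtree_Q_sound[OF assms(1,2)] unfolding nbhd_def by fastforce
  have "length (subtree_Q r c) = card (set (subtree_Q r c))"
    using distinct_card[OF distinct_subtree_Q[OF assms(1,2)]] by simp
  also have "\<dots> \<le> card (nbhd E (s - 1) c Q)" by (rule card_mono[OF finite_nbhd sub])
  also have "\<dots> \<le> lam" by (rule card_Q_ball_le[OF assms(1)])
  finally show ?thesis .
qed

lemma tree_ancestor:
  assumes "r \<in> Q" "v \<in> V" "dist E r v \<le> s"
  shows "j \<le> dist E r v \<Longrightarrow> (tree_parent E r (Tr r) ^^ j) v \<in> V \<and> dist E r ((tree_parent E r (Tr r) ^^ j) v) = dist E r v - j"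
proof (induction j)
  case 0 then show ?case using assms by simp
next
  case (Suc j)
  define x where "x = (tree_parent E r (Tr r) ^^ j) v"
  have x: "x \<in> V" "dist E r x = dist E r v - j" using Suc x_def by auto
  have "x \<noteq> r" using x Suc.prems dist_self by (metis Suc_le_lessD zero_less_diff less_irrefl)
  then have p: "(x, tree_parent E r (Tr r) x) \<in> E" "dist E r (tree_parent E r (Tr r) x) + 1 = dist E r x"
    using tree_parent_edge[OF assms(1) x(1)] x assms(3) by auto
  have "(tree_parent E r (Tr r) ^^ Suc j) v = tree_parent E r (Tr r) x" unfolding x_def by simp
  then show ?case using p x edge_in_V[OF p(1)] by simp
qed

lemma subtree_Q_complete:
  assumes r: "r \<in> Q" and v: "v \<in> Q" "v \<in> V" "dist E r v \<le> s"
  shows "(tree_parent E r (Tr r) ^^ n) v = c \<Longrightarrow> dist E r c + n = dist E r v \<Longrightarrow> v \<in> set (subtree_Q r c)"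
proof (induction n arbitrary: c)
  case 0
  then have "c = v" by simp
  moreover have "r \<in> near_roots v" using r v unfolding near_roots_def by simp
  ultimately show ?case using subtree_Q_unfold[OF v(2)] v(1) unfolding own_node_def by simp
next
  case (Suc n)
  define c' where "c' = (tree_parent E r (Tr r) ^^ n) v"
  have c': "c' \<in> V" "dist E r c' = dist E r v - n" using tree_ancestor[OF r v(2,3), of n] Suc.prems unfolding c'_def by auto
  have cc: "c = tree_parent E r (Tr r) c'" using Suc.prems(1) unfolding c'_def by simp
  have dc: "dist E r c' = dist E r c + 1" using c' Suc.prems(2) by simp
  have IH: "v \<in> set (subtree_Q r c')" using Suc.IH[OF c'_def[symmetric]] dc Suc.prems(2) by simp
  have ne: "c' \<noteq> r" using dc dist_self by (metis add_is_0 one_neq_zero)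
  have ds: "dist E r c' \<le> s" using c' v(3) by simp
  have p: "(c', c) \<in> E" "(c', c) \<in> Tr r" using tree_parent_edge[OF r c'(1) ds ne] cc by auto
  have cV: "c \<in> V" using edge_in_V[OF p(1)] by simp
  have rc: "r \<in> near_roots c" using r ds dc unfolding near_roots_def by simp
  have ce: "(c, c') \<in> E" using edge_sym[OF p(1)] .
  have "(c, c') \<in> Tr r" using p(2) sym_tree[OF r] by (auto dest: symD)
  then have "port_of deg pt c c' \<in> child_ports c r" using port_in_child_ports_iff[OF cV ce] dc by simp
  moreover have "pt c (port_of deg pt c c') = c'" using port_of_edge[OF cV ce] by simp
  ultimately have "c' \<in> set (tree_children r c)" unfolding tree_children_def using finite_child_ports by force
  then show ?case using subtree_Q_unfold[OF cV rc] IH by auto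
qed

lemma subtree_Q_root:
  assumes r: "r \<in> Q"
  shows "set (subtree_Q r r) = nbhd E s r Q"
proof
  have rr: "r \<in> V" "r \<in> near_roots r" using r Q_sub_V dist_self unfolding near_roots_def by auto
  show "set (subtree_Q r r) \<subseteq> nbhd E s r Q"
    using subtree_Q_sound[OF rr] unfolding nbhd_def by auto
next
  show "nbhd E s r Q \<subseteq> set (subtree_Q r r)"
  proof
    fix v assume "v \<in> nbhd E s r Q"
    then have v: "v \<in> Q" "v \<in> V" "dist E r v \<le> s" using Q_sub_V unfolding nbhd_def by auto
    define c where "c = (tree_parent E r (Tr r) ^^ dist E r v) v"
    have "c \<in> V" "dist E r c = 0" using tree_ancestor[OF r v(2,3), of "dist E r v"] unfolding c_def by auto
    then have "c = r" using dist_eq_0_iff[of r c] r Q_sub_V by auto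
    then show "v \<in> set (subtree_Q r r)" using subtree_Q_complete[OF r v c_def[symmetric]] \<open>dist E r c = 0\<close> by simp
  qed
qed

end

section \<open>Runs and the depth phase\<close>

lemma length_run: "length (run f inp deg pt v R) = R"
  by (induction R) auto

lemma run_nth: "j < R \<Longrightarrow> run f inp deg pt v R ! j = (\<lambda>p. if p < deg v then f (inp (pt v p)) (run f inp deg pt (pt v p) j) (port_of deg pt (pt v p) v) else [])"
proof (induction R)
  case 0 then show ?case by simp
next
  case (Suc R)
  show ?case
  proof (cases "j < R")
    case True
    then show ?thesis using Suc by (simp add: nth_append length_run)
  next
    case False
    then have jR: "j = R" using Suc.prems by simp
    show ?thesis unfolding jR by (simp add: nth_append length_run)
  qed
qed
text \<open>In each of the first s rounds the slot of T r on an edge from a parent to a child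
carries the bit telling whether the parent already knows its depth. The root knows it from the
start, so a node at depth d first receives True in history entry d - 1, and learned_depth
recovers d.\<close>

definition depth_bit :: "nat \<Rightarrow> node_input \<Rightarrow> (nat \<Rightarrow> bool list) \<Rightarrow> bool list \<Rightarrow> bool" where
  "depth_bit b x M i = hd (slot b (parent_port_ids x (the (input_parent_port x i))) i (M (the (input_parent_port x i))))"
definition depth_known :: "nat \<Rightarrow> node_input \<Rightarrow> hist \<Rightarrow> bool list \<Rightarrow> nat \<Rightarrow> bool" where
  "depth_known b x h i t = (input_parent_port x i = None \<or> (\<exists>j<t. depth_bit b x (h ! j) i))"
definition learned_depth :: "nat \<Rightarrow> node_input \<Rightarrow> hist \<Rightarrow> bool list \<Rightarrow> nat" where
  "learned_depth b x h i = (LEAST t. depth_known b x h i t)"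
definition depth_phase_msg :: "nat \<Rightarrow> node_input \<Rightarrow> hist \<Rightarrow> nat \<Rightarrow> bool list" where
  "depth_phase_msg b x h p = concat (map (\<lambda>i. pad b [depth_known b x h i (length h)]) (child_port_ids x p))"

lemma length_depth_phase_msg: "length (depth_phase_msg b x h p) = b * length (child_port_ids x p)"
  unfolding depth_phase_msg_def by (rule length_concat_uniform) simp

locale depth_phase = bfs_instance V E deg pt Q idf Tr s lam a
  for V E deg pt Q idf Tr s lam a +
  fixes f :: "node_input \<Rightarrow> hist \<Rightarrow> nat \<Rightarrow> bool list" and pay :: "nat \<Rightarrow> (bool list \<times> bool list) set" and b :: nat
  assumes slot_width_pos: "b \<ge> 1"
  and send_depth_phase: "\<And>x h p. length h < s \<Longrightarrow> f x h p = depth_phase_msg b x h p"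
begin

abbreviation "X v \<equiv> inp pay v"
abbreviation "H v t \<equiv> run f (inp pay) deg pt v t"

lemma run_received:
  assumes "c \<in> V" "(c,u) \<in> E" "j < R"
  shows "(H c R ! j) (port_of deg pt c u) = f (X u) (H u j) (port_of deg pt u c)"
  using run_nth[OF assms(3), of f "inp pay" deg pt c] port_of_edge[OF assms(1,2)] by simp

lemma hd_pad: "hd (pad b [z]) = z" using slot_width_pos unfolding pad_def by (cases b) auto

lemma parent_port_eq_None_iff: "parent_port v r = None \<longleftrightarrow> v = r" unfolding parent_port_def by simp

lemma tree_parent_channel:
  assumes "c \<in> V" "r \<in> near_roots c" "c \<noteq> r"
  defines "u \<equiv> tree_parent E r (Tr r) c"
  shows "input_parent_port (X c) (idf r) = Some (port_of deg pt c u) \<and> (c,u) \<in> E \<and> dist E r u + 1 = dist E r c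
    \<and> r \<in> near_roots u \<and> u \<in> V \<and> idf r \<in> set (parent_port_ids (X c) (port_of deg pt c u))
    \<and> parent_port_ids (X c) (port_of deg pt c u) = child_port_ids (X u) (port_of deg pt u c)"
proof -
  have rQ: "r \<in> Q" "dist E r c \<le> s" using assms(2) unfolding near_roots_def by auto
  have p: "(c,u) \<in> E" "dist E r u + 1 = dist E r c" using tree_parent_edge[OF rQ(1) assms(1) rQ(2) assms(3)] u_def by auto
  have "input_parent_port (X c) (idf r) = Some (port_of deg pt c u)"
    using input_parent_port_input[OF assms(1,2)] assms(3) unfolding parent_port_def u_def by simp
  moreover have "r \<in> near_roots u" using p rQ unfolding near_roots_def by simp
  moreover have "u \<in> V" using edge_in_V[OF p(1)] by simp
  moreover have "idf r \<in> set (parent_port_ids (X c) (port_of deg pt c u))" using id_in_parent_port_ids[OF assms(1-3)] u_def by simp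
  moreover have "parent_port_ids (X c) (port_of deg pt c u) = child_port_ids (X u) (port_of deg pt u c)"
    by (rule parent_port_ids_eq_child_port_ids[OF assms(1) p(1)])
  ultimately show ?thesis using p by blast
qed

lemma slot_from_parent:
  assumes c: "c \<in> V" "r \<in> near_roots c" "c \<noteq> r" and j: "j < R"
    and u: "u = tree_parent E r (Tr r) c"
    and send: "f (X u) (H u j) (port_of deg pt u c) = concat (map g (child_port_ids (X u) (port_of deg pt u c)))"
    and g: "\<And>i. length (g i) = b"
  shows "slot b (parent_port_ids (X c) (port_of deg pt c u)) (idf r) ((H c R ! j) (port_of deg pt c u)) = g (idf r)"
proof -
  note U = tree_parent_channel[OF c, folded u]
  let ?L = "child_port_ids (X u) (port_of deg pt u c)"
  have "(H c R ! j) (port_of deg pt c u) = concat (map g ?L)"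
    using run_received[OF c(1)] U j send by metis
  moreover have "slot b ?L (idf r) (concat (map g ?L)) = g (idf r)"
    using U g by (intro slot_concat) auto
  ultimately show ?thesis using U by simp
qed

lemma slot_from_child:
  assumes c: "c \<in> V" "r \<in> near_roots c" "q \<in> child_ports c r" and j: "j < R"
    and send: "f (X (pt c q)) (H (pt c q) j) (port_of deg pt (pt c q) c)
      = concat (map g (parent_port_ids (X (pt c q)) (port_of deg pt (pt c q) c)))"
    and g: "\<And>i. length (g i) = b"
  shows "slot b (child_port_ids (X c) q) (idf r) ((H c R ! j) q) = g (idf r)"
proof -
  define ci where "ci = pt c q"
  note C = child_port_props[OF c, folded ci_def]
  have ci: "ci \<in> V" "r \<in> near_roots ci" "ci \<noteq> r" "tree_parent E r (Tr r) ci = c" using C by auto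
  note U = tree_parent_channel[OF ci(1-3), unfolded ci(4)]
  let ?L = "parent_port_ids (X ci) (port_of deg pt ci c)"
  have L: "child_port_ids (X c) q = ?L" "idf r \<in> set ?L" using U C by auto
  have "(H c R ! j) q = concat (map g ?L)"
    using run_received[OF c(1) _ j, of ci] C send unfolding ci_def by simp
  moreover have "slot b ?L (idf r) (concat (map g ?L)) = g (idf r)"
    using L g by (intro slot_concat) auto
  ultimately show ?thesis using L by simp
qed

lemma depth_bit_correct:
  "j < s \<Longrightarrow> c \<in> V \<Longrightarrow> r \<in> near_roots c \<Longrightarrow> c \<noteq> r \<Longrightarrow> j < R \<Longrightarrow>
    depth_bit b (X c) (H c R ! j) (idf r) = (dist E r c \<le> j + 1)"
proof (induction j arbitrary: c R rule: less_induct)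
  case (less j)
  define u where "u = tree_parent E r (Tr r) c"
  note U = tree_parent_channel[OF less.prems(2-4), folded u_def]
  have "f (X u) (H u j) (port_of deg pt u c)
      = concat (map (\<lambda>i. pad b [depth_known b (X u) (H u j) i j]) (child_port_ids (X u) (port_of deg pt u c)))"
    using send_depth_phase[of "H u j"] less.prems(1) unfolding depth_phase_msg_def by (simp add: length_run)
  from slot_from_parent[OF less.prems(2-5) u_def this]
  have "depth_bit b (X c) (H c R ! j) (idf r) = depth_known b (X u) (H u j) (idf r) j"
    using U unfolding depth_bit_def by (simp add: hd_pad)
  also have "\<dots> = (dist E r u \<le> j)"
  proof (cases "u = r")
    case True
    then show ?thesis unfolding depth_known_def using input_parent_port_input[of u r pay] U parent_port_eq_None_iff dist_self by simp
  next
    case False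
    have "input_parent_port (X u) (idf r) \<noteq> None" using input_parent_port_input[of u r pay] U parent_port_eq_None_iff False by simp
    then have "depth_known b (X u) (H u j) (idf r) j = (\<exists>j'<j. depth_bit b (X u) (H u j ! j') (idf r))"
      unfolding depth_known_def by blast
    also have "\<dots> = (\<exists>j'<j. dist E r u \<le> j' + 1)"
      using less.IH[of _ u j] less.prems(1) U False by auto
    also have "\<dots> = (dist E r u \<le> j)"
    proof
      assume "\<exists>j'<j. dist E r u \<le> j' + 1" then show "dist E r u \<le> j" by auto
    next
      assume h: "dist E r u \<le> j"
      have "dist E r u \<noteq> 0" using dist_eq_0_iff False U Q_sub_V unfolding near_roots_def by (metis dist_commute subsetD mem_Collect_eq)
      then show "\<exists>j'<j. dist E r u \<le> j' + 1" using h by (intro exI[of _ "dist E r u - 1"]) auto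
    qed
    finally show ?thesis .
  qed
  also have "\<dots> = (dist E r c \<le> j + 1)" using U by auto
  finally show ?case .
qed

lemma learned_depth_correct:
  assumes "c \<in> V" "r \<in> near_roots c" "s \<le> t"
  shows "learned_depth b (X c) (H c t) (idf r) = dist E r c"
proof (cases "c = r")
  case True
  then have "input_parent_port (X c) (idf r) = None" using input_parent_port_input[OF assms(1,2)] parent_port_eq_None_iff by simp
  then show ?thesis unfolding learned_depth_def depth_known_def using True dist_self by simp
next
  case False
  have nn: "input_parent_port (X c) (idf r) \<noteq> None" using input_parent_port_input[OF assms(1,2)] parent_port_eq_None_iff False by simp
  have ds: "dist E r c \<le> s" using assms(2) unfolding near_roots_def by simp
  have d1: "dist E r c \<noteq> 0" using dist_eq_0_iff False assms Q_sub_V unfolding near_roots_def by (metis dist_commute subsetD mem_Collect_eq)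
  have rb: "\<And>j. j < s \<Longrightarrow> depth_bit b (X c) (H c t ! j) (idf r) = (dist E r c \<le> j + 1)"
    using depth_bit_correct[OF _ assms(1,2) False] assms(3) by simp
  show ?thesis unfolding learned_depth_def
  proof (rule Least_equality)
    show "depth_known b (X c) (H c t) (idf r) (dist E r c)"
      unfolding depth_known_def using rb[of "dist E r c - 1"] ds d1 by (intro disjI2 exI[of _ "dist E r c - 1"]) auto
  next
    fix y assume "depth_known b (X c) (H c t) (idf r) y"
    then obtain j where j: "j < y" "depth_bit b (X c) (H c t ! j) (idf r)" unfolding depth_known_def using nn by auto
    show "dist E r c \<le> y"
    proof (rule ccontr)
      assume "\<not> dist E r c \<le> y"
      then have "j < s" "\<not> dist E r c \<le> j + 1" using j(1) ds by auto
      then show False using rb j(2) by simp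
    qed
  qed
qed

end

section \<open>Broadcast\<close>

text \<open>Once its history has length s + k a root sends chunk k of its message, and every other
node forwards the slot it has just received from its parent; so a node at depth d finds chunk k
in history entry s + d + k - 1.\<close>

definition bcast_slot :: "nat \<Rightarrow> nat \<Rightarrow> node_input \<Rightarrow> hist \<Rightarrow> bool list \<Rightarrow> bool list" where
  "bcast_slot s b x h i = (if input_parent_port x i = None then pad b (drop ((length h - s) * b) (input_payload x i))
     else slot b (parent_port_ids x (the (input_parent_port x i))) i ((h ! (length h - 1)) (the (input_parent_port x i))))"
definition bcast_send :: "nat \<Rightarrow> nat \<Rightarrow> node_input \<Rightarrow> hist \<Rightarrow> nat \<Rightarrow> bool list" where
  "bcast_send s b x h p = (if length h < s then depth_phase_msg b x h p else concat (map (bcast_slot s b x h) (child_port_ids x p)))"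
definition bcast_decode :: "nat \<Rightarrow> nat \<Rightarrow> nat \<Rightarrow> nat \<Rightarrow> node_input \<Rightarrow> hist \<Rightarrow> bool list \<Rightarrow> bool list" where
  "bcast_decode s m b K x h i = (if input_parent_port x i = None then input_payload x i else
     take m (concat (map (\<lambda>k. slot b (parent_port_ids x (the (input_parent_port x i))) i ((h ! (s + learned_depth b x h i + k - 1)) (the (input_parent_port x i)))) [0..<K])))"
definition bcast_output :: "nat \<Rightarrow> nat \<Rightarrow> nat \<Rightarrow> nat \<Rightarrow> node_input \<Rightarrow> hist \<Rightarrow> (bool list \<times> bool list) set" where
  "bcast_output s m b K x h = {(i, bcast_decode s m b K x h i) | i. i \<in> input_roots x}"

lemma length_bcast_slot: "length (bcast_slot s b x h i) = b" unfolding bcast_slot_def slot_def by simp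

lemma length_bcast_send: "length (bcast_send s b x h p) = b * length (child_port_ids x p)"
  unfolding bcast_send_def using length_depth_phase_msg length_concat_uniform[of _ "bcast_slot s b x h" b] length_bcast_slot by simp

locale broadcast_run = bfs_instance V E deg pt Q idf Tr s lam a
  for V E deg pt Q idf Tr s lam a +
  fixes msg :: "nat \<Rightarrow> bool list" and b :: nat
  assumes slot_width_pos: "b \<ge> 1"
begin

sublocale R: depth_phase V E deg pt Q idf Tr s lam a "bcast_send s b" "\<lambda>v. {(idf v, msg v)}" b
  by unfold_locales (use slot_width_pos in \<open>auto simp: bcast_send_def\<close>)

abbreviation "XX v \<equiv> inp (\<lambda>v. {(idf v, msg v)}) v"
abbreviation "HH v t \<equiv> run (bcast_send s b) (inp (\<lambda>v. {(idf v, msg v)})) deg pt v t"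

lemma input_payload_bcast: "v \<in> Q \<Longrightarrow> input_payload (XX v) (idf v) = msg v"
  unfolding input_payload_def mk_input_def by simp

lemma bcast_pipeline:
  "1 \<le> d \<Longrightarrow> c \<in> V \<Longrightarrow> r \<in> near_roots c \<Longrightarrow> dist E r c = d \<Longrightarrow> s + d + k - 1 < R \<Longrightarrow>
   slot b (parent_port_ids (XX c) (port_of deg pt c (tree_parent E r (Tr r) c))) (idf r)
     ((HH c R ! (s + d + k - 1)) (port_of deg pt c (tree_parent E r (Tr r) c))) = chunk b (msg r) k"
proof (induction d arbitrary: c R)
  case 0 then show ?case by simp
next
  case (Suc d)
  have cr: "c \<noteq> r" using Suc.prems(4) dist_self by auto
  define u where "u = tree_parent E r (Tr r) c"
  note U = R.tree_parent_channel[OF Suc.prems(2,3) cr, folded u_def]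
  define j where "j = s + Suc d + k - 1"
  have "bcast_send s b (XX u) (HH u j) (port_of deg pt u c)
      = concat (map (bcast_slot s b (XX u) (HH u j)) (child_port_ids (XX u) (port_of deg pt u c)))"
    unfolding bcast_send_def j_def by (simp add: length_run)
  from R.slot_from_parent[OF Suc.prems(2,3) cr _ u_def this length_bcast_slot] Suc.prems(5)
  have "slot b (parent_port_ids (XX c) (port_of deg pt c u)) (idf r) ((HH c R ! j) (port_of deg pt c u)) = bcast_slot s b (XX u) (HH u j) (idf r)"
    unfolding j_def by simp
  also have "\<dots> = chunk b (msg r) k"
  proof (cases "u = r")
    case True
    have rQ: "r \<in> Q" using Suc.prems(3) unfolding near_roots_def by simp
    have "input_parent_port (XX u) (idf r) = None" using input_parent_port_input[of u r] U True R.parent_port_eq_None_iff by simp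
    moreover have "length (HH u j) - s = k" using True U Suc.prems(4) dist_self unfolding j_def by (simp add: length_run)
    ultimately show ?thesis unfolding bcast_slot_def chunk_def using True input_payload_bcast[OF rQ] by simp
  next
    case False
    define u2 where "u2 = tree_parent E r (Tr r) u"
    note U2 = R.tree_parent_channel[of u r, folded u2_def]
    have parent_port_u: "input_parent_port (XX u) (idf r) = Some (port_of deg pt u u2)" using U2 U False by blast
    have du1: "dist E r u = d" using U Suc.prems(4) by simp
    have rQ: "r \<in> Q" using Suc.prems(3) unfolding near_roots_def by simp
    have "dist E r u \<noteq> 0" using dist_eq_0_iff[of r u] U False Q_sub_V rQ by blast
    then have du: "dist E r u = d" "1 \<le> d" using du1 by auto
    have jj: "length (HH u j) - 1 = s + d + k - 1" using du unfolding j_def by (simp add: length_run)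
    have "bcast_slot s b (XX u) (HH u j) (idf r) = slot b (parent_port_ids (XX u) (port_of deg pt u u2)) (idf r) ((HH u j ! (s + d + k - 1)) (port_of deg pt u u2))"
      unfolding bcast_slot_def using parent_port_u jj by simp
    also have "\<dots> = chunk b (msg r) k"
    proof -
      have "u \<in> V" "r \<in> near_roots u" using U by blast+
      moreover have "s + d + k - 1 < j" using du unfolding j_def by simp
      ultimately show ?thesis using Suc.IH[OF du(2) _ _ du(1), of j] unfolding u2_def by blast
    qed
    finally show ?thesis .
  qed
  finally show ?case unfolding u_def j_def .
qed

lemma bcast_decode_correct:
  assumes c: "c \<in> V" "r \<in> near_roots c" and R: "R = 2 * s + K" and mK: "m \<le> K * b"
    and ml: "length (msg r) = m"
  shows "bcast_decode s m b K (XX c) (HH c R) (idf r) = msg r"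
proof (cases "c = r")
  case True
  have rQ: "r \<in> Q" using c(2) unfolding near_roots_def by simp
  have "input_parent_port (XX c) (idf r) = None" using input_parent_port_input[OF c] True R.parent_port_eq_None_iff by simp
  then show ?thesis unfolding bcast_decode_def using input_payload_bcast[OF rQ] True by simp
next
  case False
  define u where "u = tree_parent E r (Tr r) c"
  note U = R.tree_parent_channel[OF c False, folded u_def]
  have pp: "input_parent_port (XX c) (idf r) = Some (port_of deg pt c u)" using U by blast
  have dep: "learned_depth b (XX c) (HH c R) (idf r) = dist E r c" using R.learned_depth_correct[OF c] R by simp
  have rQ: "r \<in> Q" and ds0: "dist E r c \<le> s" using c(2) unfolding near_roots_def by auto
  have "dist E r c \<noteq> 0" using dist_eq_0_iff[of r c] c(1) False Q_sub_V rQ by blast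
  then have ds: "dist E r c \<le> s" "1 \<le> dist E r c" using ds0 by auto
  have EQ: "map (\<lambda>k. slot b (parent_port_ids (XX c) (port_of deg pt c u)) (idf r) ((HH c R ! (s + dist E r c + k - 1)) (port_of deg pt c u))) [0..<K]
      = map (chunk b (msg r)) [0..<K]"
  proof (rule map_cong[OF refl])
    fix k assume "k \<in> set [0..<K]"
    then have "s + dist E r c + k - 1 < R" using ds R by simp
    then show "slot b (parent_port_ids (XX c) (port_of deg pt c u)) (idf r) ((HH c R ! (s + dist E r c + k - 1)) (port_of deg pt c u)) = chunk b (msg r) k"
      using bcast_pipeline[OF ds(2) c refl] unfolding u_def by blast
  qed
  have "bcast_decode s m b K (XX c) (HH c R) (idf r) = take m (concat (map (\<lambda>k. slot b (parent_port_ids (XX c) (port_of deg pt c u)) (idf r) ((HH c R ! (s + dist E r c + k - 1)) (port_of deg pt c u))) [0..<K]))"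
    unfolding bcast_decode_def using pp dep by simp
  also have "\<dots> = take m (concat (map (chunk b (msg r)) [0..<K]))" unfolding EQ ..
  also have "\<dots> = msg r" unfolding concat_chunks using mK ml by simp
  finally show ?thesis .
qed

lemma bcast_output_correct:
  assumes c: "c \<in> V" and R: "R = 2 * s + K" and mK: "m \<le> K * b"
    and ml: "\<forall>v\<in>Q. length (msg v) = m"
  shows "bcast_output s m b K (XX c) (HH c R) = {(idf v, msg v) | v. v \<in> Q \<and> dist E v c \<le> s}"
proof -
  have "bcast_output s m b K (XX c) (HH c R) = {(idf r, bcast_decode s m b K (XX c) (HH c R) (idf r)) | r. r \<in> near_roots c}"
    unfolding bcast_output_def input_roots_input by blast
  also have "\<dots> = {(idf r, msg r) | r. r \<in> near_roots c}"
    using bcast_decode_correct[OF c _ R mK] ml unfolding near_roots_def by force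
  finally show ?thesis unfolding near_roots_def by simp
qed

lemma bcast_bandwidth:
  assumes "b * lam \<le> B"
  shows "bandwidth_ok B R V (bcast_send s b) (inp (\<lambda>v. {(idf v, msg v)})) deg pt"
  unfolding bandwidth_ok_def
proof (intro allI impI ballI)
  fix t v p assume "t < R" "v \<in> V" "p < deg v"
  then have l: "length (child_port_ids (XX v) p) \<le> lam" using length_child_port_ids by blast
  have "length (bcast_send s b (XX v) (HH v t) p) = b * length (child_port_ids (XX v) p)"
    by (rule length_bcast_send)
  also have "\<dots> \<le> b * lam" using l by simp
  finally show "length (bcast_send s b (XX v) (HH v t) p) \<le> B" using assms by simp
qed

end

section \<open>Q-messages\<close>

text \<open>In T r a node at depth d starts sending its stream once its history has length 2s - d:
its own report followed by the streams of its children, which started one round earlier and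
are read from history entry 2s - d - 1 on.\<close>

definition own_frame :: "node_input \<Rightarrow> bool list \<Rightarrow> bool list list" where
  "own_frame x i = (if inQ x then [nid x @ input_payload x i] else [])"
definition received_stream :: "nat \<Rightarrow> node_input \<Rightarrow> hist \<Rightarrow> nat \<Rightarrow> bool list \<Rightarrow> nat \<Rightarrow> nat \<Rightarrow> bool list" where
  "received_stream b x h q i j0 n = concat (map (\<lambda>j. slot b (child_port_ids x q) i ((h ! (j0 + j)) q)) [0..<n])"
definition collected_stream :: "nat \<Rightarrow> nat \<Rightarrow> nat \<Rightarrow> node_input \<Rightarrow> hist \<Rightarrow> bool list \<Rightarrow> nat \<Rightarrow> bool list" where
  "collected_stream s b L x h i d = frames (own_frame x i) @ join_streams L (map (\<lambda>q. received_stream b x h q i (2*s - d - 1) (length h - (2*s - d - 1))) (sorted_list_of_set (input_child_ports x i)))"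
definition collect_slot :: "nat \<Rightarrow> nat \<Rightarrow> nat \<Rightarrow> node_input \<Rightarrow> hist \<Rightarrow> bool list \<Rightarrow> bool list" where
  "collect_slot s b L x h i = (if 2*s - learned_depth b x h i \<le> length h
     then pad b (drop ((length h - (2*s - learned_depth b x h i)) * b) (collected_stream s b L x h i (learned_depth b x h i))) else pad b [])"
definition qmsg_send :: "nat \<Rightarrow> nat \<Rightarrow> nat \<Rightarrow> node_input \<Rightarrow> hist \<Rightarrow> nat \<Rightarrow> bool list" where
  "qmsg_send s b L x h p = (if length h < s then depth_phase_msg b x h p else concat (map (collect_slot s b L x h) (parent_port_ids x p)))"
definition qmsg_output :: "nat \<Rightarrow> nat \<Rightarrow> nat \<Rightarrow> nat \<Rightarrow> nat \<Rightarrow> node_input \<Rightarrow> hist \<Rightarrow> (bool list \<times> bool list) set" where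
  "qmsg_output s a b L K x h = {(nid x, input_payload x (nid x))} \<union>
     (\<Union>q \<in> input_child_ports x (nid x). set (map (\<lambda>it. (take a it, drop a it)) (split_frames L (fst (scan_frames L (received_stream b x h q (nid x) (2*s - 1) K))))))"

lemma length_collect_slot: "length (collect_slot s b L x h i) = b" unfolding collect_slot_def by simp

lemma length_qmsg_send: "length (qmsg_send s b L x h p) \<le> b * max (length (child_port_ids x p)) (length (parent_port_ids x p))"
  unfolding qmsg_send_def using length_depth_phase_msg length_concat_uniform[of _ "collect_slot s b L x h" b] length_collect_slot by simp

locale qmessage_run = bfs_instance V E deg pt Q idf Tr s lam a
  for V E deg pt Q idf Tr s lam a +
  fixes msg :: "nat \<Rightarrow> nat \<Rightarrow> bool list" and m b :: nat
  assumes slot_width_pos: "b \<ge> 1"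
  and mlen: "\<forall>v\<in>Q. \<forall>w\<in>nbhd E s v Q. length (msg v w) = m"
begin

definition "qpayload v = {(idf w, msg v w) | w. w \<in> nbhd E s v Q}"

sublocale R: depth_phase V E deg pt Q idf Tr s lam a "qmsg_send s b (a + m)" qpayload b
  by unfold_locales (use slot_width_pos in \<open>auto simp: qmsg_send_def\<close>)

abbreviation "XQ v \<equiv> inp qpayload v"
abbreviation "HQ v t \<equiv> run (qmsg_send s b (a + m)) (inp qpayload) deg pt v t"

definition "report r v = idf v @ msg v r"
definition "subtree_stream r c = frames (map (report r) (subtree_Q r c)) @ [False]"

lemma input_payload_qmsg:
  assumes "v \<in> Q" "w \<in> nbhd E s v Q"
  shows "input_payload (XQ v) (idf w) = msg v w"
  unfolding input_payload_def
proof (rule the_equality)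
  show "(idf w, msg v w) \<in> payload (XQ v)" using assms unfolding mk_input_def qpayload_def by auto
next
  fix mm assume "(idf w, mm) \<in> payload (XQ v)"
  then obtain w' where w': "w' \<in> nbhd E s v Q" "idf w = idf w'" "mm = msg v w'"
    using assms unfolding mk_input_def qpayload_def by auto
  have vV: "v \<in> V" using assms Q_sub_V by auto
  have "nbhd E s v Q \<subseteq> nbhd E s v V" using Q_sub_V unfolding nbhd_def by auto
  then have "w = w'" using id_inj[OF vV] w' assms(2) inj_onD by (metis subsetD)
  then show "mm = msg v w" using w' by simp
qed

lemma own_frame_input:
  assumes "c \<in> V" "r \<in> near_roots c"
  shows "own_frame (XQ c) (idf r) = map (report r) (own_node c)"
proof (cases "c \<in> Q")
  case True
  have "r \<in> nbhd E s c Q" using assms unfolding near_roots_def nbhd_def using dist_commute[of c r] by simp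
  then show ?thesis using True input_payload_qmsg unfolding own_frame_def own_node_def report_def mk_input_def by simp
next
  case False
  then show ?thesis unfolding own_frame_def own_node_def mk_input_def by simp
qed

lemma length_report:
  assumes "c \<in> V" "r \<in> near_roots c" "v \<in> set (subtree_Q r c)"
  shows "length (report r v) = a + m"
proof -
  have v: "v \<in> Q" "v \<in> V" "dist E r v \<le> s" using subtree_Q_sound[OF assms] by auto
  then have "r \<in> nbhd E s v Q" using assms(2) dist_commute[of v r] unfolding near_roots_def nbhd_def by simp
  then show ?thesis unfolding report_def using id_length[OF v(2)] mlen v(1) by simp
qed

lemma received_stream_correct:
  assumes c: "c \<in> V" "r \<in> near_roots c" "q \<in> child_ports c r"
    and child_chunks: "\<And>k. collect_slot s b (a + m) (XQ (pt c q)) (HQ (pt c q) (2 * s - dist E r (pt c q) + k)) (idf r) = chunk b (subtree_stream r (pt c q)) k"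
    and t: "2 * s - dist E r c - 1 + n \<le> t"
  shows "received_stream b (XQ c) (HQ c t) q (idf r) (2 * s - dist E r c - 1) n = take (n * b) (subtree_stream r (pt c q) @ replicate (n * b) False)"
proof -
  define ci where "ci = pt c q"
  note C = child_port_props[OF c, folded ci_def]
  have "slot b (child_port_ids (XQ c) q) (idf r) ((HQ c t ! (2 * s - dist E r c - 1 + j)) q) = chunk b (subtree_stream r ci) j"
    if "j < n" for j
  proof -
    define J where "J = 2 * s - dist E r c - 1 + j"
    have J: "J < t" "J = 2 * s - dist E r ci + j" "\<not> length (HQ ci J) < s"
      using that t C unfolding J_def near_roots_def by (auto simp: length_run)
    have "qmsg_send s b (a + m) (XQ ci) (HQ ci J) (port_of deg pt ci c)
        = concat (map (collect_slot s b (a + m) (XQ ci) (HQ ci J)) (parent_port_ids (XQ ci) (port_of deg pt ci c)))"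
      using J(3) unfolding qmsg_send_def by simp
    from R.slot_from_child[OF c J(1), folded ci_def, OF this length_collect_slot]
    show ?thesis using child_chunks[of j] J(2) unfolding J_def ci_def by simp
  qed
  then have EQ: "map (\<lambda>j. slot b (child_port_ids (XQ c) q) (idf r) ((HQ c t ! (2 * s - dist E r c - 1 + j)) q)) [0..<n]
      = map (chunk b (subtree_stream r ci)) [0..<n]"
    by simp
  have "received_stream b (XQ c) (HQ c t) q (idf r) (2 * s - dist E r c - 1) n = concat (map (chunk b (subtree_stream r ci)) [0..<n])"
    unfolding received_stream_def EQ ..
  then show ?thesis unfolding concat_chunks ci_def .
qed

lemma subtree_stream_unfold:
  assumes "c \<in> V" "r \<in> near_roots c"
  shows "subtree_stream r c = frames (map (report r) (own_node c)) @ concat (map frames (map (\<lambda>ci. map (report r) (subtree_Q r ci)) (tree_children r c))) @ [False]"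
  unfolding subtree_stream_def subtree_Q_unfold[OF assms] by (simp add: map_concat comp_def concat_concat)

lemma length_children_reports:
  assumes "c \<in> V" "r \<in> near_roots c" "ci \<in> set (tree_children r c)" "v \<in> set (subtree_Q r ci)"
  shows "length (report r v) = a + m"
  using tree_child_props[OF assms(1-3)] length_report assms(4) by blast

lemma collect_pipeline:
  "c \<in> V \<Longrightarrow> r \<in> near_roots c \<Longrightarrow> c \<noteq> r \<Longrightarrow>
   collect_slot s b (a + m) (XQ c) (HQ c (2 * s - dist E r c + k)) (idf r) = chunk b (subtree_stream r c) k"
proof (induction "s - dist E r c" arbitrary: c k rule: less_induct)
  case less
  note c = less.prems
  define dc where "dc = dist E r c"
  define t where "t = 2 * s - dc + k"
  define h where "h = HQ c t"
  define n where "n = Suc k * b"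
  have ds: "dc \<le> s" "1 \<le> dc" using c dist_eq_0_iff[of r c] Q_sub_V unfolding near_roots_def dc_def by auto
  have dep: "learned_depth b (XQ c) h (idf r) = dc" unfolding h_def dc_def using R.learned_depth_correct[OF c(1,2)] ds t_def dc_def by simp
  have lh: "length h = t" unfolding h_def by (simp add: length_run)
  have pc: "input_child_ports (XQ c) (idf r) = child_ports c r" using input_child_ports_input[OF c(1,2)] .
  define xss where "xss = map (\<lambda>ci. map (report r) (subtree_Q r ci)) (tree_children r c)"
  have received: "map (\<lambda>q. received_stream b (XQ c) h q (idf r) (2 * s - dc - 1) (length h - (2 * s - dc - 1))) (sorted_list_of_set (child_ports c r))
      = map (\<lambda>xs. take n (frames xs @ False # replicate n False)) xss"
    unfolding xss_def tree_children_def map_map comp_def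
  proof (rule map_cong[OF refl], goal_cases)
    case (1 q)
    then have q: "q \<in> child_ports c r" using finite_child_ports by simp
    note C = child_port_props[OF c(1,2) q]
    have lt: "s - dist E r (pt c q) < s - dist E r c" using C unfolding near_roots_def by auto
    have child_chunks: "\<And>k. collect_slot s b (a + m) (XQ (pt c q)) (HQ (pt c q) (2 * s - dist E r (pt c q) + k)) (idf r) = chunk b (subtree_stream r (pt c q)) k"
      using less.hyps[OF lt] C by blast
    have e: "length h - (2 * s - dc - 1) = Suc k" using lh ds unfolding t_def by simp
    have "received_stream b (XQ c) h q (idf r) (2 * s - dc - 1) (Suc k) = take n (subtree_stream r (pt c q) @ replicate n False)"
      using received_stream_correct[OF c(1,2) q child_chunks, of "Suc k" t] ds unfolding h_def n_def dc_def t_def by simp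
    then show ?case unfolding e subtree_stream_def by (simp add: comp_def)
  qed
  have report_lengths: "\<forall>xs\<in>set xss. \<forall>it\<in>set xs. length it = a + m"
    unfolding xss_def using length_children_reports[OF c(1,2)] by auto
  define P where "P = collected_stream s b (a + m) (XQ c) h (idf r) dc"
  have P: "P = frames (map (report r) (own_node c)) @ join_streams (a + m) (map (\<lambda>xs. take n (frames xs @ False # replicate n False)) xss)"
    unfolding P_def collected_stream_def pc received[symmetric] own_frame_input[OF c(1,2)] ..
  have "collect_slot s b (a + m) (XQ c) h (idf r) = pad b (drop (k * b) P)"
    unfolding collect_slot_def dep P_def using lh ds unfolding t_def by simp
  also have "\<dots> = chunk b (subtree_stream r c) k"
    unfolding P subtree_stream_unfold[OF c(1,2)] xss_def[symmetric] using chunk_join_streams[OF report_lengths n_def] .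
  finally show ?case unfolding h_def t_def dc_def .
qed

lemma child_subtree_output:
  assumes w: "w \<in> Q" and q: "q \<in> child_ports w w" and R: "R = 2 * s + K" and K: "(a + m + 1) * lam < K * b"
  shows "set (map (\<lambda>it. (take a it, drop a it)) (split_frames (a + m) (fst (scan_frames (a + m) (received_stream b (XQ w) (HQ w R) q (idf w) (2 * s - 1) K)))))
     = (\<lambda>v. (idf v, msg v w)) ` set (subtree_Q w (pt w q))"
proof -
  have wV: "w \<in> V" and wb: "w \<in> near_roots w" using w Q_sub_V dist_self unfolding near_roots_def by auto
  define ci where "ci = pt w q"
  note C = child_port_props[OF wV wb q, folded ci_def]
  have child_chunks: "\<And>k. collect_slot s b (a + m) (XQ (pt w q)) (HQ (pt w q) (2 * s - dist E w (pt w q) + k)) (idf w) = chunk b (subtree_stream w (pt w q)) k"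
  proof -
    fix k
    have "ci \<in> V" "w \<in> near_roots ci" "ci \<noteq> w" using C by auto
    then show "collect_slot s b (a + m) (XQ (pt w q)) (HQ (pt w q) (2 * s - dist E w (pt w q) + k)) (idf w) = chunk b (subtree_stream w (pt w q)) k"
      using collect_pipeline[of ci w k] unfolding ci_def by simp
  qed
  have "received_stream b (XQ w) (HQ w R) q (idf w) (2 * s - dist E w w - 1) K = take (K * b) (subtree_stream w ci @ replicate (K * b) False)"
    using received_stream_correct[OF wV wb q child_chunks, of K R] R unfolding ci_def by simp
  then have rv: "received_stream b (XQ w) (HQ w R) q (idf w) (2 * s - 1) K = take (K * b) (frames (map (report w) (subtree_Q w ci)) @ False # replicate (K * b) False)"
    using dist_self[of E w] unfolding subtree_stream_def by simp
  have report_lengths: "\<forall>it\<in>set (map (report w) (subtree_Q w ci)). length it = a + m" using length_report[of ci w] C by auto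
  have "length (frames (map (report w) (subtree_Q w ci))) = (a + m + 1) * length (subtree_Q w ci)"
    using length_frames[OF report_lengths] by simp
  also have "\<dots> \<le> (a + m + 1) * lam" using length_subtree_Q[of ci w] C by (intro mult_le_mono2) simp
  finally have lt: "length (frames (map (report w) (subtree_Q w ci))) < K * b" using K by simp
  have "fst (scan_frames (a + m) (received_stream b (XQ w) (HQ w R) q (idf w) (2 * s - 1) K)) = frames (map (report w) (subtree_Q w ci))"
    unfolding rv scan_frames_take[OF report_lengths] using lt by simp
  then have "split_frames (a + m) (fst (scan_frames (a + m) (received_stream b (XQ w) (HQ w R) q (idf w) (2 * s - 1) K))) = map (report w) (subtree_Q w ci)"
    using split_frames_concat[OF report_lengths] by simp
  moreover have "\<And>v. v \<in> set (subtree_Q w ci) \<Longrightarrow> take a (report w v) = idf v \<and> drop a (report w v) = msg v w"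
    unfolding report_def using subtree_Q_sound[of ci w] C id_length by auto
  ultimately show ?thesis unfolding ci_def by force
qed

lemma qmsg_output_correct:
  assumes w: "w \<in> Q" and R: "R = 2 * s + K" and K: "(a + m + 1) * lam < K * b"
  shows "qmsg_output s a b (a + m) K (XQ w) (HQ w R) = {(idf v, msg v w) | v. v \<in> nbhd E s w Q}"
proof -
  have wV: "w \<in> V" and wb: "w \<in> near_roots w" using w Q_sub_V dist_self unfolding near_roots_def by auto
  have nid: "nid (XQ w) = idf w" unfolding mk_input_def by simp
  have wn: "w \<in> nbhd E s w Q" using w dist_self unfolding nbhd_def by auto
  have "qmsg_output s a b (a + m) K (XQ w) (HQ w R) = {(idf w, msg w w)} \<union> (\<Union>q \<in> child_ports w w. (\<lambda>v. (idf v, msg v w)) ` set (subtree_Q w (pt w q)))"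
    unfolding qmsg_output_def nid input_child_ports_input[OF wV wb] input_payload_qmsg[OF w wn] using child_subtree_output[OF w _ R K] by simp
  also have "\<dots> = (\<lambda>v. (idf v, msg v w)) ` set (subtree_Q w w)"
    unfolding subtree_Q_unfold[OF wV wb] own_node_def tree_children_def using w finite_child_ports by auto
  also have "\<dots> = {(idf v, msg v w) | v. v \<in> nbhd E s w Q}" unfolding subtree_Q_root[OF w] by blast
  finally show ?thesis .
qed

lemma qmsg_bandwidth:
  assumes "b * lam \<le> B"
  shows "bandwidth_ok B R V (qmsg_send s b (a + m)) (inp qpayload) deg pt"
  unfolding bandwidth_ok_def
proof (intro allI impI ballI)
  fix t v p assume "t < R" "v \<in> V" "p < deg v"
  then have l: "length (child_port_ids (XQ v) p) \<le> lam" "length (parent_port_ids (XQ v) p) \<le> lam" using length_child_port_ids length_parent_port_ids by blast+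
  have "length (qmsg_send s b (a + m) (XQ v) (HQ v t) p) \<le> b * max (length (child_port_ids (XQ v) p)) (length (parent_port_ids (XQ v) p))"
    by (rule length_qmsg_send)
  also have "\<dots> \<le> b * lam" using l by simp
  finally show "length (qmsg_send s b (a + m) (XQ v) (HQ v t) p) \<le> B" using assms by simp
qed

end

section \<open>Solving the two tasks\<close>

lemma solves_broadcast_bcast:
  assumes b: "1 \<le> b" "b * lam \<le> B" and mK: "m \<le> K * b"
  shows "solves_broadcast s lam m a B (2 * s + K) (bcast_send s b) (bcast_output s m b K)"
  unfolding solves_broadcast_def Let_def
proof (intro allI impI conjI ballI)
  fix V E deg pt Q idf Tr and msg :: "nat \<Rightarrow> bool list"
  assume A: "setting V E deg pt Q idf Tr s lam a \<and> (\<forall>v\<in>Q. length (msg v) = m)"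
  interpret broadcast_run V E deg pt Q idf Tr s lam a msg b
    by unfold_locales (use A b in auto)
  show "bandwidth_ok B (2 * s + K) V (bcast_send s b) (inp (\<lambda>v. {(idf v, msg v)})) deg pt"
    by (rule bcast_bandwidth[OF b(2)])
  fix w assume "w \<in> V"
  show "bcast_output s m b K (XX w) (HH w (2 * s + K)) = {(idf v, msg v) |v. v \<in> Q \<and> dist E v w \<le> s}"
    by (rule bcast_output_correct[OF \<open>w \<in> V\<close> refl mK]) (use A in auto)
qed

lemma solves_Qmessage_qmsg:
  assumes b: "1 \<le> b" "b * lam \<le> B" and K: "(a + m + 1) * lam < K * b"
  shows "solves_Qmessage s lam m a B (2 * s + K) (qmsg_send s b (a + m)) (qmsg_output s a b (a + m) K)"
  unfolding solves_Qmessage_def Let_def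
proof (intro allI impI conjI ballI)
  fix V E deg pt Q idf Tr and msg :: "nat \<Rightarrow> nat \<Rightarrow> bool list"
  assume A: "setting V E deg pt Q idf Tr s lam a \<and> (\<forall>v\<in>Q. \<forall>w\<in>nbhd E s v Q. length (msg v w) = m)"
  interpret qmessage_run V E deg pt Q idf Tr s lam a msg m b
    by unfold_locales (use A b in auto)
  have payload: "(\<lambda>v. {(idf w, msg v w) |w. w \<in> nbhd E s v Q}) = qpayload"
    unfolding qpayload_def ..
  show "bandwidth_ok B (2 * s + K) V (qmsg_send s b (a + m)) (inp (\<lambda>v. {(idf w, msg v w) |w. w \<in> nbhd E s v Q})) deg pt"
    unfolding payload by (rule qmsg_bandwidth[OF b(2)])
  fix w assume "w \<in> Q"
  show "qmsg_output s a b (a + m) K (inp (\<lambda>v. {(idf w, msg v w) |w. w \<in> nbhd E s v Q}) w)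
          (run (qmsg_send s b (a + m)) (inp (\<lambda>v. {(idf w, msg v w) |w. w \<in> nbhd E s v Q})) deg pt w (2 * s + K))
        = {(idf v, msg v w) |v. v \<in> nbhd E s w Q}"
    unfolding payload by (rule qmsg_output_correct[OF \<open>w \<in> Q\<close> refl K])
qed

text \<open>With a = 0 all identifiers are empty, so their local uniqueness makes every
ball a singleton and no communication is needed.\<close>

lemma (in bfs_instance) Q_ball_eq_singleton_if_no_ids:
  assumes "a = 0" "w \<in> Q"
  shows "nbhd E s w Q = {w}"
proof
  have wV: "w \<in> V" using assms(2) Q_sub_V by auto
  show "{w} \<subseteq> nbhd E s w Q" using assms(2) dist_self unfolding nbhd_def by auto
  show "nbhd E s w Q \<subseteq> {w}"
  proof
    fix v assume v: "v \<in> nbhd E s w Q"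
    have "v \<in> nbhd E s w V" "w \<in> nbhd E s w V"
      using v wV Q_sub_V dist_self unfolding nbhd_def by auto
    moreover have "idf v = idf w" using id_length assms(1) wV \<open>v \<in> nbhd E s w V\<close> unfolding nbhd_def by auto
    ultimately show "v \<in> {w}" using id_inj[OF wV] inj_onD by fastforce
  qed
qed

lemma qmessage_solvable_no_ids:
  "solves_Qmessage s lam m 0 B 0 (\<lambda>x h p. []) (\<lambda>x h. payload x)"
  unfolding solves_Qmessage_def Let_def
proof (intro allI impI conjI ballI)
  fix V E deg pt Q idf Tr and msg :: "nat \<Rightarrow> nat \<Rightarrow> bool list"
  assume "setting V E deg pt Q idf Tr s lam 0 \<and> (\<forall>v\<in>Q. \<forall>w\<in>nbhd E s v Q. length (msg v w) = m)"
  then interpret bfs_instance V E deg pt Q idf Tr s lam 0 by unfold_locales auto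
  show "bandwidth_ok B 0 V (\<lambda>x h p. []) (inp (\<lambda>v. {(idf w, msg v w) |w. w \<in> nbhd E s v Q})) deg pt"
    unfolding bandwidth_ok_def by simp
  fix w assume "w \<in> Q"
  then show "payload (inp (\<lambda>v. {(idf w, msg v w) |w. w \<in> nbhd E s v Q}) w) = {(idf v, msg v w) |v. v \<in> nbhd E s w Q}"
    unfolding mk_input_def using Q_ball_eq_singleton_if_no_ids by simp
qed

lemma mod_block_count:
  fixes x b :: nat
  assumes "1 \<le> b"
  shows "x < (x div b + 1) * b"
proof -
  have "x = x div b * b + x mod b" by simp
  moreover have "x mod b < b" using assms by simp
  moreover have "(x div b + 1) * b = x div b * b + b" by simp
  ultimately show ?thesis by linarith
qed

lemma div_block_bounds:
  fixes lam B :: nat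
  assumes "1 \<le> lam" "lam \<le> B"
  shows "1 \<le> B div lam" "B div lam * lam \<le> B" "B \<le> 2 * lam * (B div lam)"
proof -
  have "lam div lam \<le> B div lam" by (rule div_le_mono[OF assms(2)])
  then show q: "1 \<le> B div lam" using assms by simp
  show "B div lam * lam \<le> B" by (rule div_times_less_eq_dividend)
  have "B < lam * (B div lam) + lam"
    using mod_block_count[of lam B] assms(1) by (simp add: algebra_simps)
  also have "\<dots> \<le> 2 * lam * (B div lam)" using q by simp
  finally show "B \<le> 2 * lam * (B div lam)" by simp
qed

lemma div_block_le:
  fixes x lam B :: nat
  assumes "1 \<le> lam" "lam \<le> B"
  shows "real (x div (B div lam)) \<le> 2 * real x * real lam / real B"
proof -
  define b where "b = B div lam"
  have b: "1 \<le> b" "B \<le> 2 * lam * b" using div_block_bounds[OF assms] unfolding b_def by auto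
  have "real (x div b) \<le> real x / real b" by (rule of_nat_div_le_of_nat)
  also have "\<dots> \<le> 2 * real x * real lam / real B"
  proof -
    have "real B \<le> 2 * real lam * real b" using b(2) by (metis of_nat_le_iff of_nat_mult of_nat_numeral)
    then have "real B * real x \<le> 2 * real lam * real b * real x" by (rule mult_right_mono) simp
    then show ?thesis using b(1) assms by (simp add: field_simps)
  qed
  finally show ?thesis unfolding b_def .
qed

lemma broadcast_solvable:
  assumes "1 \<le> s" "1 \<le> lam" "lam \<le> B"
  shows "\<exists>R f g. real R \<le> 8 * (real s + real m * real lam / real B) \<and> solves_broadcast s lam m a B R f g"
proof -
  define b where "b = B div lam"
  define K where "K = m div b + 1"
  have b: "1 \<le> b" "b * lam \<le> B" using div_block_bounds[OF assms(2,3)] unfolding b_def by auto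
  have "m \<le> K * b" using mod_block_count[OF b(1), of m] unfolding K_def by simp
  note solves = solves_broadcast_bcast[OF b this, of s a]
  have "real K \<le> 1 + 2 * (real m * real lam / real B)"
    using div_block_le[OF assms(2,3), of m] unfolding K_def b_def by simp
  then have "real (2 * s + K) \<le> 8 * (real s + real m * real lam / real B)"
    using assms(1) by simp
  then show ?thesis using solves by blast
qed

lemma qmessage_solvable:
  assumes "1 \<le> s" "1 \<le> lam" "lam \<le> B"
  shows "\<exists>R f g. real R \<le> 8 * (real s + (real m + real a) * real lam ^ 2 / real B) \<and> solves_Qmessage s lam m a B R f g"
proof (cases "a = 0")
  case True
  have "real 0 \<le> 8 * (real s + (real m + real a) * real lam ^ 2 / real B)" by simp
  then show ?thesis using qmessage_solvable_no_ids True by blast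
next
  case False
  define b where "b = B div lam"
  define K where "K = (a + m + 1) * lam div b + 1"
  have b: "1 \<le> b" "b * lam \<le> B" using div_block_bounds[OF assms(2,3)] unfolding b_def by auto
  have "(a + m + 1) * lam < K * b" using mod_block_count[OF b(1)] unfolding K_def by simp
  note solves = solves_Qmessage_qmsg[OF b this, of s]
  have "real K \<le> 1 + 2 * real ((a + m + 1) * lam) * real lam / real B"
    using div_block_le[OF assms(2,3), of "(a + m + 1) * lam"] unfolding K_def b_def by simp
  also have "\<dots> \<le> 1 + 4 * ((real m + real a) * real lam ^ 2 / real B)"
  proof -
    have "real (a + m + 1) \<le> 2 * (real m + real a)" using False by simp
    then have "(2 * real lam * real lam) * real (a + m + 1) \<le> (2 * real lam * real lam) * (2 * (real m + real a))"
      by (rule mult_left_mono) simp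
    then have "2 * real ((a + m + 1) * lam) * real lam \<le> 4 * ((real m + real a) * real lam ^ 2)"
      by (simp add: power2_eq_square algebra_simps)
    then show ?thesis by (simp add: divide_right_mono)
  qed
  finally have "real (2 * s + K) \<le> 8 * (real s + (real m + real a) * real lam ^ 2 / real B)"
    using assms(1) by simp
  then show ?thesis using solves by blast
qed

theorem lemma10:
  shows "\<exists>C::real. C > 0 \<and>
    (\<forall>s lam m a B :: nat. s \<ge> 1 \<and> lam \<ge> 1 \<and> B \<ge> lam \<longrightarrow>
       (\<exists>R f g. real R \<le> C * (real s + real m * real lam / real B)
                \<and> solves_broadcast s lam m a B R f g)
     \<and> (\<exists>R f g. real R \<le> C * (real s + (real m + real a) * real lam ^ 2 / real B)
                \<and> solves_Qmessage s lam m a B R f g))"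
  using broadcast_solvable qmessage_solvable by (intro exI[of _ 8]) auto

end
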